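(* Let $n\le m$ and let $\mathcal C$ be an $(n,k)$ linear code over $\mathrm{GF}(q^m)$ with rank covering radius $\rho$. Then $k=n-\rho$ if any of the following holds: $\rho\in\{0,1,n-1,n\}$; or $\rho(n-\rho)\le m-\sigma(q)$; or $\mathcal C$ is a generalized Gabidulin code; or $\mathcal C$ is an elementary linear subspace.
   Context: The rank $\mathrm{rk}(\mathbf x)$ of $\mathbf x\in\mathrm{GF}(q^m)^n$ is the maximum number of its coordinates linearly independent over $\mathrm{GF}(q)$; $d_{\mathrm R}(\mathbf x,\mathbf y)=\mathrm{rk}(\mathbf x-\mathbf y)$; the rank covering radius of $C$ is $\max_{\mathbf x}\min_{\mathbf c\in C}d_{\mathrm R}(\mathbf x,\mathbf c)$. $\sigma(q)=\frac{1}{\ln q}\sum_{k=1}^\infty\frac{1}{k(q^k-1)}$. An elementary linear subspace is a $\mathrm{GF}(q^m)$-subspace of $\mathrm{GF}(q^m)^n$ that has a basis consisting of vectors in $\mathrm{GF}(q)^n$. A generalized Gabidulin code of dimension $k\le n$ is the code with generator matrix whose $(i,j)$ entry ($0\le i\le k-1$, $0\le j\le n-1$) is $g_j^{q^{ai}}$, where $g_0,\dots,g_{n-1}\in\mathrm{GF}(q^m)$ are linearly independent over $\mathrm{GF}(q)$ and $a$ is an integer coprime to $m$; it has minimum rank distance $n-k+1$. *)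

theory Defs
  imports Complex_Main
begin

text \<open>Setting: the ambient finite field 'a plays the role of GF(q^m); the set F is a
subfield of it with card F = q, i.e. GF(q). Vectors of GF(q^m)^n are functions
nat => 'a vanishing outside {..<n}.\<close>

definition subfield :: "'a::field set \<Rightarrow> bool" where
  "subfield F \<longleftrightarrow> 0 \<in> F \<and> 1 \<in> F \<and> (\<forall>x\<in>F. \<forall>y\<in>F. x + y \<in> F \<and> x * y \<in> F)
     \<and> (\<forall>x\<in>F. - x \<in> F) \<and> (\<forall>x\<in>F. x \<noteq> 0 \<longrightarrow> inverse x \<in> F)"

definition vecs :: "nat \<Rightarrow> (nat \<Rightarrow> 'a::zero) set" where
  "vecs n = {x. \<forall>i\<ge>n. x i = 0}"

definition coords_indep :: "'a::field set \<Rightarrow> (nat \<Rightarrow> 'a) \<Rightarrow> nat set \<Rightarrow> bool" where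
  "coords_indep F x S \<longleftrightarrow> (\<forall>c. (\<forall>i\<in>S. c i \<in> F) \<and> (\<Sum>i\<in>S. c i * x i) = 0 \<longrightarrow> (\<forall>i\<in>S. c i = 0))"

definition rk :: "'a::field set \<Rightarrow> nat \<Rightarrow> (nat \<Rightarrow> 'a) \<Rightarrow> nat" where
  "rk F n x = Max {card S | S. S \<subseteq> {..<n} \<and> coords_indep F x S}"

definition rank_dist :: "'a::field set \<Rightarrow> nat \<Rightarrow> (nat \<Rightarrow> 'a) \<Rightarrow> (nat \<Rightarrow> 'a) \<Rightarrow> nat" where
  "rank_dist F n x y = rk F n (\<lambda>j. x j - y j)"

definition rank_covering_radius :: "'a::{field,finite} set \<Rightarrow> nat \<Rightarrow> (nat \<Rightarrow> 'a) set \<Rightarrow> nat" where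
  "rank_covering_radius F n C = Max ((\<lambda>x. Min ((\<lambda>c. rank_dist F n x c) ` C)) ` vecs n)"

definition vec_indep :: "'a::field set \<Rightarrow> (nat \<Rightarrow> 'a) set \<Rightarrow> bool" where
  "vec_indep K B \<longleftrightarrow> (\<forall>c. (\<forall>b\<in>B. c b \<in> K) \<and> (\<forall>j. (\<Sum>b\<in>B. c b * b j) = 0) \<longrightarrow> (\<forall>b\<in>B. c b = 0))"

definition vec_span :: "(nat \<Rightarrow> 'a::field) set \<Rightarrow> (nat \<Rightarrow> 'a) set" where
  "vec_span B = {x. \<exists>c. x = (\<lambda>j. \<Sum>b\<in>B. c b * b j)}"

definition linear_code :: "nat \<Rightarrow> nat \<Rightarrow> (nat \<Rightarrow> 'a::field) set \<Rightarrow> bool" where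
  "linear_code n k C \<longleftrightarrow> (\<exists>B. finite B \<and> card B = k \<and> B \<subseteq> vecs n \<and> vec_indep UNIV B \<and> C = vec_span B)"

definition elementary_subspace :: "'a::field set \<Rightarrow> nat \<Rightarrow> (nat \<Rightarrow> 'a) set \<Rightarrow> bool" where
  "elementary_subspace F n C \<longleftrightarrow> (\<exists>B. finite B \<and> B \<subseteq> vecs n \<and> (\<forall>b\<in>B. \<forall>j. b j \<in> F)
       \<and> vec_indep UNIV B \<and> C = vec_span B)"

text \<open>Generalized Gabidulin code: row space of the k x n matrix (g_j^(q^(a i))),
 g_0..g_{n-1} linearly independent over F, gcd(a,m)=1. Since x^(q^m)=x in GF(q^m),
 the Frobenius power q^(a i) for an integer a i is taken as q^((a i) mod m).\<close>
definition gen_gabidulin :: "'a::field set \<Rightarrow> nat \<Rightarrow> nat \<Rightarrow> nat \<Rightarrow> (nat \<Rightarrow> 'a) set \<Rightarrow> bool" where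
  "gen_gabidulin F q m n C \<longleftrightarrow> (\<exists>k g a. k \<le> n \<and> coords_indep F g {..<n} \<and> coprime a (int m) \<and>
     C = {x. \<exists>u. x = (\<lambda>j. if j < n then (\<Sum>i<k. u i * g j ^ (q ^ nat ((a * int i) mod int m))) else 0)})"

definition sigma :: "nat \<Rightarrow> real" where
  "sigma q = (1 / ln (real q)) * (\<Sum>k. 1 / (real (Suc k) * (real q ^ Suc k - 1)))"

end

(*
  The bound rho <= n - k holds for every linear code: extending a basis of C by unit vectors
  shows that every word agrees with some codeword outside at most n - k coordinates.

  The rank ball of radius r has at most
  q^(m r) [n r]_q elements, [n r]_q the Gaussian binomial coefficient, so if [n rho]_q < q^m the
  sphere-covering bound forces k + rho >= n.  This applies when rho is 0, 1 or n - 1, and when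
  rho (n - rho) <= m - sigma(q), because [n r]_q <= q^(r (n - r)) prod_i q^i / (q^i - 1) and
  that product is below exp (sigma(q) ln q).  For an elementary code, a word whose
  coordinates are linearly independent over GF(q) keeps rank at least n - k after subtracting
  any codeword, whose coordinates span a GF(q)-space of dimension at most k.  For a
  generalized Gabidulin code, the word (g_j^(q^(a k))) differs from each codeword by the values
  at g_0, ..., g_(n-1) of a nonzero linearized polynomial of q^a-degree k; such a polynomial is
  GF(q)-linear with at most q^k roots, so these values span a space of dimension >= n - k.
*)
theory Submission
  imports Defs "HOL-Library.FuncSet" "HOL-Library.Function_Algebras"
    "HOL-Computational_Algebra.Polynomial" "HOL-Number_Theory.Cong"
begin

section \<open>Linear algebra over a subfield given as a set\<close>

lemma subfield_0: "subfield K \<Longrightarrow> 0 \<in> K"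
  and subfield_1: "subfield K \<Longrightarrow> 1 \<in> K"
  and subfield_add: "subfield K \<Longrightarrow> x \<in> K \<Longrightarrow> y \<in> K \<Longrightarrow> x + y \<in> K"
  and subfield_mult: "subfield K \<Longrightarrow> x \<in> K \<Longrightarrow> y \<in> K \<Longrightarrow> x * y \<in> K"
  and subfield_uminus: "subfield K \<Longrightarrow> x \<in> K \<Longrightarrow> - x \<in> K"
  by (simp_all add: subfield_def)

lemma subfield_diff: "subfield K \<Longrightarrow> x \<in> K \<Longrightarrow> y \<in> K \<Longrightarrow> x - y \<in> K"
  using subfield_add[of K x "- y"] subfield_uminus[of K y] by simp

lemma subfield_divide: "subfield K \<Longrightarrow> x \<in> K \<Longrightarrow> y \<in> K \<Longrightarrow> x / y \<in> K"
  unfolding divide_inverse by (cases "y = 0") (simp_all add: subfield_def)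

lemma subfield_UNIV: "subfield UNIV"
  by (simp add: subfield_def)

lemma subfield_card_ge_2:
  assumes "subfield K" "finite K" shows "card K \<ge> 2"
proof -
  have "{0, 1} \<subseteq> K" using assms by (simp add: subfield_0 subfield_1)
  then have "card {0::'a, 1} \<le> card K" using assms(2) by (rule card_mono[rotated])
  then show ?thesis by simp
qed

definition span_over :: "'a::field set \<Rightarrow> 'i set \<Rightarrow> ('i \<Rightarrow> 'a) \<Rightarrow> 'a set" where
  "span_over K I y = {(\<Sum>i\<in>I. c i * y i) | c. \<forall>i\<in>I. c i \<in> K}"

definition subspace_over :: "'a::field set \<Rightarrow> 'a set \<Rightarrow> bool" where
  "subspace_over K V \<longleftrightarrow> 0 \<in> V \<and> (\<forall>x\<in>V. \<forall>y\<in>V. x + y \<in> V) \<and> (\<forall>c\<in>K. \<forall>x\<in>V. c * x \<in> V)"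

lemma subspace_over_sum: "subspace_over K V \<Longrightarrow> (\<And>i. i \<in> I \<Longrightarrow> f i \<in> V) \<Longrightarrow> sum f I \<in> V"
  by (induction I rule: infinite_finite_induct) (simp_all add: subspace_over_def)

lemma span_over_eq_image: "span_over K I y = (\<lambda>c. \<Sum>i\<in>I. c i * y i) ` (I \<rightarrow>\<^sub>E K)"
proof
  show "span_over K I y \<subseteq> (\<lambda>c. \<Sum>i\<in>I. c i * y i) ` (I \<rightarrow>\<^sub>E K)"
  proof
    fix a assume "a \<in> span_over K I y"
    then obtain c where c: "a = (\<Sum>i\<in>I. c i * y i)" "\<forall>i\<in>I. c i \<in> K"
      unfolding span_over_def by blast
    then have "a = (\<Sum>i\<in>I. restrict c I i * y i)" "restrict c I \<in> I \<rightarrow>\<^sub>E K" by auto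
    then show "a \<in> (\<lambda>c. \<Sum>i\<in>I. c i * y i) ` (I \<rightarrow>\<^sub>E K)" by blast
  qed
qed (auto simp: span_over_def)

lemma subspace_over_span:
  assumes "subfield K" shows "subspace_over K (span_over K I y)"
  unfolding subspace_over_def span_over_eq_image
proof (intro conjI ballI)
  show "0 \<in> (\<lambda>c. \<Sum>i\<in>I. c i * y i) ` (I \<rightarrow>\<^sub>E K)"
    using assms by (intro image_eqI[of _ _ "restrict (\<lambda>_. 0) I"]) (auto simp: subfield_0)
next
  fix a b assume "a \<in> (\<lambda>c. \<Sum>i\<in>I. c i * y i) ` (I \<rightarrow>\<^sub>E K)" "b \<in> (\<lambda>c. \<Sum>i\<in>I. c i * y i) ` (I \<rightarrow>\<^sub>E K)"
  then obtain c d where "c \<in> I \<rightarrow>\<^sub>E K" "d \<in> I \<rightarrow>\<^sub>E K" "a = (\<Sum>i\<in>I. c i * y i)" "b = (\<Sum>i\<in>I. d i * y i)"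
    by blast
  then show "a + b \<in> (\<lambda>c. \<Sum>i\<in>I. c i * y i) ` (I \<rightarrow>\<^sub>E K)"
    using assms by (intro image_eqI[of _ _ "\<lambda>i\<in>I. c i + d i"])
      (auto simp: sum.distrib algebra_simps PiE_mem intro!: subfield_add[OF assms])
next
  fix e a assume "e \<in> K" "a \<in> (\<lambda>c. \<Sum>i\<in>I. c i * y i) ` (I \<rightarrow>\<^sub>E K)"
  then obtain c where "c \<in> I \<rightarrow>\<^sub>E K" "a = (\<Sum>i\<in>I. c i * y i)" by blast
  then show "e * a \<in> (\<lambda>c. \<Sum>i\<in>I. c i * y i) ` (I \<rightarrow>\<^sub>E K)"
    using assms \<open>e \<in> K\<close> by (intro image_eqI[of _ _ "\<lambda>i\<in>I. e * c i"])
      (auto simp: sum_distrib_left algebra_simps PiE_mem intro!: subfield_mult[OF assms])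
qed

lemma span_over_subset:
  assumes "subspace_over K V" "\<And>i. i \<in> I \<Longrightarrow> y i \<in> V" shows "span_over K I y \<subseteq> V"
proof
  fix a assume "a \<in> span_over K I y"
  then obtain c where c: "a = (\<Sum>i\<in>I. c i * y i)" "\<forall>i\<in>I. c i \<in> K"
    unfolding span_over_def by blast
  show "a \<in> V" unfolding c(1)
    by (rule subspace_over_sum[OF assms(1)]) (use assms c in \<open>auto simp: subspace_over_def\<close>)
qed

lemma span_over_base:
  assumes "subfield K" "finite I" "j \<in> I" shows "y j \<in> span_over K I y"
proof -
  have "(\<Sum>i\<in>I. (if i = j then 1 else 0) * y i) = (\<Sum>i\<in>I. if i = j then y i else 0)"
    by (rule sum.cong) auto
  then have "y j = (\<Sum>i\<in>I. (if i = j then 1 else 0) * y i)"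
    using assms by simp
  then show ?thesis unfolding span_over_def
    by (intro CollectI exI[of _ "\<lambda>i. if i = j then 1 else 0"]) (simp add: assms subfield_0 subfield_1)
qed

lemma finite_span_over: "finite K \<Longrightarrow> finite I \<Longrightarrow> finite (span_over K I y)"
  unfolding span_over_eq_image by (simp add: finite_PiE)

lemma card_span_over_le: "finite K \<Longrightarrow> finite I \<Longrightarrow> card (span_over K I y) \<le> card K ^ card I"
proof -
  assume fin: "finite K" "finite I"
  have "card (span_over K I y) \<le> card (I \<rightarrow>\<^sub>E K)"
    unfolding span_over_eq_image using fin by (intro card_image_le) (simp add: finite_PiE)
  then show ?thesis using fin by (simp add: card_PiE)
qed

lemma card_span_over:
  assumes "subfield K" "finite K" "finite I" "coords_indep K y I"
  shows "card (span_over K I y) = card K ^ card I"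
proof -
  have "inj_on (\<lambda>c. \<Sum>i\<in>I. c i * y i) (I \<rightarrow>\<^sub>E K)"
  proof (rule inj_onI)
    fix c d assume c: "c \<in> I \<rightarrow>\<^sub>E K" and d: "d \<in> I \<rightarrow>\<^sub>E K"
      and eq: "(\<Sum>i\<in>I. c i * y i) = (\<Sum>i\<in>I. d i * y i)"
    have "(\<Sum>i\<in>I. (c i - d i) * y i) = 0" using eq by (simp add: algebra_simps sum_subtractf)
    moreover have "\<forall>i\<in>I. c i - d i \<in> K" using c d assms(1) subfield_diff by blast
    ultimately have "\<forall>i\<in>I. c i - d i = 0"
      using assms(4)[unfolded coords_indep_def, rule_format, of "\<lambda>i. c i - d i"] by blast
    then show "c = d" using c d by (intro PiE_ext) auto
  qed
  then show ?thesis unfolding span_over_eq_image using assms(2,3) by (simp add: card_image card_PiE)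
qed

lemma
  assumes "\<And>i. i \<in> I \<Longrightarrow> y i = z i"
  shows coords_indep_cong: "coords_indep K y I = coords_indep K z I"
    and span_over_cong: "span_over K I y = span_over K I z"
proof -
  have "(\<Sum>i\<in>I. c i * y i) = (\<Sum>i\<in>I. c i * z i)" for c
    using assms by (intro sum.cong) auto
  then show "coords_indep K y I = coords_indep K z I" "span_over K I y = span_over K I z"
    unfolding coords_indep_def span_over_def by simp_all
qed

lemma coords_indep_subset:
  assumes "coords_indep K y I" "J \<subseteq> I" "finite I" "subfield K"
  shows "coords_indep K y J"
  unfolding coords_indep_def
proof (intro allI impI)
  fix c assume c: "(\<forall>i\<in>J. c i \<in> K) \<and> (\<Sum>i\<in>J. c i * y i) = 0"
  let ?c = "\<lambda>i. if i \<in> J then c i else 0"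
  have "(\<Sum>i\<in>I. ?c i * y i) = (\<Sum>i\<in>J. c i * y i)"
    using assms(2,3) by (intro sum.mono_neutral_cong_right) auto
  then have "(\<forall>i\<in>I. ?c i \<in> K) \<and> (\<Sum>i\<in>I. ?c i * y i) = 0"
    using c assms(4) by (simp add: subfield_0)
  then have "\<forall>i\<in>I. ?c i = 0" using assms(1) unfolding coords_indep_def by (elim allE impE)
  then show "\<forall>i\<in>J. c i = 0" using assms(2) by (metis subsetD)
qed

lemma coords_indep_insert:
  assumes K: "subfield K" and "finite I" "j \<notin> I"
    and indep: "coords_indep K y I" and not_in_span: "y j \<notin> span_over K I y"
  shows "coords_indep K y (insert j I)"
  unfolding coords_indep_def
proof (intro allI impI)
  fix c assume c: "(\<forall>i\<in>insert j I. c i \<in> K) \<and> (\<Sum>i\<in>insert j I. c i * y i) = 0"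
  then have rel: "c j * y j + (\<Sum>i\<in>I. c i * y i) = 0" using assms(2,3) by simp
  have "c j = 0"
  proof (rule ccontr)
    assume "c j \<noteq> 0"
    then have "y j = - (\<Sum>i\<in>I. c i * y i) / c j"
      using rel by (simp add: field_simps add_eq_0_iff)
    also have "\<dots> = (\<Sum>i\<in>I. (- c i / c j) * y i)"
      by (simp add: sum_divide_distrib sum_negf[symmetric])
    finally have "y j = (\<Sum>i\<in>I. (- c i / c j) * y i)" .
    moreover have "\<forall>i\<in>I. - c i / c j \<in> K" using c K by (auto intro!: subfield_divide subfield_uminus)
    ultimately have "y j \<in> span_over K I y"
      unfolding span_over_def by (intro CollectI exI[of _ "\<lambda>i. - c i / c j"]) simp
    then show False using not_in_span by contradiction
  qed
  then show "\<forall>i\<in>insert j I. c i = 0" using rel c indep unfolding coords_indep_def by auto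
qed

lemma subspace_over_basis:
  assumes K: "subfield K" "finite K" and V: "subspace_over K V" "finite V"
  obtains d y where "\<forall>i<d. y i \<in> V" "coords_indep K y {..<d}" "span_over K {..<d} y = V"
proof -
  define D where "D = {d. \<exists>y. (\<forall>i<d. y i \<in> V) \<and> coords_indep K y {..<d}}"
  have bound: "d \<le> card V" if "d \<in> D" for d
  proof -
    obtain y where y: "\<forall>i<d. y i \<in> V" "coords_indep K y {..<d}" using \<open>d \<in> D\<close> D_def by blast
    have "d < 2 ^ d" by (rule less_exp)
    also have "\<dots> \<le> card K ^ d" using subfield_card_ge_2[OF K] by (simp add: power_mono)
    also have "\<dots> = card (span_over K {..<d} y)" using card_span_over[OF K _ y(2)] by simp
    also have "\<dots> \<le> card V" using y V by (intro card_mono span_over_subset) auto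
    finally show ?thesis by simp
  qed
  have "0 \<in> D" unfolding D_def coords_indep_def by auto
  have finD: "finite D" using bound by (meson finite_nat_set_iff_bounded_le)
  define d where "d = Max D"
  have "d \<in> D" unfolding d_def using finD \<open>0 \<in> D\<close> by (intro Max_in) auto
  then obtain y where y: "\<forall>i<d. y i \<in> V" "coords_indep K y {..<d}" using D_def by blast
  have "span_over K {..<d} y = V"
  proof (rule ccontr)
    assume "span_over K {..<d} y \<noteq> V"
    moreover have "span_over K {..<d} y \<subseteq> V" using y V by (intro span_over_subset) auto
    ultimately obtain v where v: "v \<in> V" "v \<notin> span_over K {..<d} y" by blast
    define y' where "y' = y(d := v)"
    have "coords_indep K y' {..<d}" "span_over K {..<d} y' = span_over K {..<d} y"
      using y(2) coords_indep_cong[of "{..<d}" y' y] span_over_cong[of "{..<d}" y' y]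
      by (simp_all add: y'_def)
    then have "coords_indep K y' (insert d {..<d})"
      using v by (intro coords_indep_insert K) (auto simp: y'_def)
    moreover have "\<forall>i<Suc d. y' i \<in> V" using y v unfolding y'_def by auto
    ultimately have "Suc d \<in> D" unfolding D_def by (auto simp: lessThan_Suc)
    then show False using Max_ge[OF finD] unfolding d_def by fastforce
  qed
  then show ?thesis using y that by blast
qed

lemma card_subspace_over:
  assumes "subfield K" "finite K" "subspace_over K V" "finite V"
  obtains d where "card V = card K ^ d"
proof -
  obtain d y where "coords_indep K y {..<d}" "span_over K {..<d} y = V"
    using subspace_over_basis[OF assms] .
  then show ?thesis using card_span_over[OF assms(1,2)] that by fastforce
qed

lemma subspace_over_plus:
  assumes V: "subspace_over K V" and W: "subspace_over K W"
  shows "subspace_over K ((\<lambda>(a, b). a + b) ` (V \<times> W))"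
  unfolding subspace_over_def
proof (intro conjI ballI)
  show "0 \<in> (\<lambda>(a, b). a + b) ` (V \<times> W)"
    using V W unfolding subspace_over_def by (intro image_eqI[of _ _ "(0, 0)"]) auto
next
  fix x y assume "x \<in> (\<lambda>(a, b). a + b) ` (V \<times> W)" "y \<in> (\<lambda>(a, b). a + b) ` (V \<times> W)"
  then obtain a b a' b' where "a \<in> V" "b \<in> W" "a' \<in> V" "b' \<in> W" "x = a + b" "y = a' + b'" by auto
  then show "x + y \<in> (\<lambda>(a, b). a + b) ` (V \<times> W)"
    using V W unfolding subspace_over_def
    by (intro image_eqI[of _ _ "(a + a', b + b')"]) (auto simp: algebra_simps)
next
  fix c x assume "c \<in> K" "x \<in> (\<lambda>(a, b). a + b) ` (V \<times> W)"
  then obtain a b where "a \<in> V" "b \<in> W" "x = a + b" by auto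
  then show "c * x \<in> (\<lambda>(a, b). a + b) ` (V \<times> W)"
    using V W \<open>c \<in> K\<close> unfolding subspace_over_def
    by (intro image_eqI[of _ _ "(c * a, c * b)"]) (auto simp: algebra_simps)
qed

section \<open>Finite fields\<close>

lemma subfield_power_card:
  fixes x :: "'a::{field,finite}"
  assumes K: "subfield K" and x: "x \<in> K" shows "x ^ card K = x"
proof (cases "x = 0")
  case False
  have "card K > 0" using K by (metis card_gt_0_iff empty_iff finite subfield_0)
  have "x * (\<Prod>y\<in>K-{0}. x * y) = x * x ^ (card K - 1) * \<Prod>(K-{0})"
    using K x by (simp add: prod.distrib mult_ac subfield_0)
  also have "x * x ^ (card K - 1) = x ^ card K"
    using \<open>card K > 0\<close> by (metis Suc_diff_1 power_Suc)
  also have "(\<Prod>y\<in>K-{0}. x * y) = (\<Prod>y\<in>K-{0}. y)"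
    \<comment> \<open>multiplication by \<open>x\<close> permutes \<open>K - {0}\<close>\<close>
    by (rule prod.reindex_bij_witness[of _ "\<lambda>y. y / x" "\<lambda>y. x * y"])
       (use False K x in \<open>auto intro: subfield_mult subfield_divide\<close>)
  finally show ?thesis by simp
qed (use assms in \<open>auto simp: subfield_def card_gt_0_iff zero_power\<close>)

lemma card_UNIV_ge_2: "card (UNIV :: 'a::{field,finite} set) \<ge> 2"
  using subfield_card_ge_2[OF subfield_UNIV finite_UNIV] .

lemma card_fixed_points_power_le:
  assumes "n \<ge> 2" shows "card {x::'a::field. x ^ n = x} \<le> n"
proof -
  define P :: "'a poly" where "P = monom 1 n - [:0, 1:]"
  have "coeff P n = 1" unfolding P_def using assms by (simp add: coeff_monom coeff_pCons split: nat.split)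
  then have "P \<noteq> 0" by auto
  have "degree P \<le> max (degree (monom (1::'a) n)) (degree [:0::'a, 1:])"
    unfolding P_def by (rule degree_diff_le_max)
  also have "\<dots> \<le> n" using assms by (simp add: degree_monom_eq)
  finally have "degree P \<le> n" .
  moreover have "{x::'a. x ^ n = x} = {x. poly P x = 0}" by (auto simp: P_def poly_monom)
  ultimately show ?thesis using card_poly_roots_bound[OF \<open>P \<noteq> 0\<close>] by simp
qed

lemma subfield_eq_fixed_points:
  fixes K :: "'a::{field,finite} set"
  assumes "subfield K" shows "K = {x. x ^ card K = x}"
proof (rule card_subset_eq)
  show sub: "K \<subseteq> {x. x ^ card K = x}" using subfield_power_card[OF assms] by blast
  have "card {x::'a. x ^ card K = x} \<le> card K"
    using subfield_card_ge_2[OF assms] by (intro card_fixed_points_power_le) simp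
  then show "card K = card {x::'a. x ^ card K = x}" using card_mono[OF finite sub] by simp
qed simp

lemma prime_CHAR_finite: "prime CHAR('a::{field,finite})"
  by (rule prime_CHAR_semidom, rule finite_imp_CHAR_pos) simp

lemma prime_subfield_eq:
  "{x::'a::{field,finite}. x ^ CHAR('a) = x} = of_nat ` {..<CHAR('a)}"
proof -
  let ?p = "CHAR('a)"
  have p: "prime ?p" "?p \<ge> 2" using prime_CHAR_finite prime_ge_2_nat by blast+
  have inj: "inj_on (of_nat :: nat \<Rightarrow> 'a) {..<?p}"
    by (rule inj_onI) (simp add: of_nat_eq_iff_cong_CHAR cong_def)
  have "(of_nat i :: 'a) ^ ?p = of_nat i" for i
    by (induction i) (simp_all add: freshmans_dream[OF p(1)] zero_power prime_gt_0_nat[OF p(1)])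
  then have sub: "of_nat ` {..<?p} \<subseteq> {x::'a. x ^ ?p = x}" by auto
  have "card {x::'a. x ^ ?p = x} \<le> card (of_nat ` {..<?p} :: 'a set)"
    using card_fixed_points_power_le[OF p(2)] card_image[OF inj] by simp
  then show ?thesis using sub card_mono[OF finite sub] by (intro card_subset_eq[symmetric]) auto
qed

lemma subfield_card_CHAR_power:
  fixes K :: "'a::{field,finite} set"
  assumes K: "subfield K" obtains d where "card K = CHAR('a) ^ d"
proof -
  let ?p = "CHAR('a)" let ?E = "{x::'a. x ^ ?p = x}"
  have p: "prime ?p" by (rule prime_CHAR_finite)
  have E: "subfield ?E"
    unfolding subfield_def using prime_gt_0_nat[OF p]
    by (auto simp: freshmans_dream[OF p] power_mult_distrib power_inverse zero_power
        minus_power_prime_CHAR[OF refl p])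
  have "of_nat i \<in> K" for i
    by (induction i) (simp_all add: K subfield_0 subfield_1 subfield_add)
  then have "?E \<subseteq> K" unfolding prime_subfield_eq by auto
  then have "subspace_over ?E K" using K by (auto simp: subspace_over_def subfield_0 subfield_add subfield_mult)
  then obtain d where "card K = card ?E ^ d" using card_subspace_over[OF E finite _ finite] by blast
  moreover have "card ?E = ?p"
    unfolding prime_subfield_eq
    by (simp add: card_image inj_on_def of_nat_eq_iff_cong_CHAR cong_def)
  ultimately show ?thesis using that by simp
qed

locale finite_subfield =
  fixes F :: "'a::{field,finite} set" and q :: nat
  assumes subfield: "subfield F" and card_F: "card F = q"
begin

lemma q_ge_2: "q \<ge> 2"
  using subfield_card_ge_2[OF subfield] card_F by simp

lemma q_power_eq_CHAR_power: obtains d where "q ^ s = CHAR('a) ^ d"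
proof -
  obtain d where "card F = CHAR('a) ^ d" using subfield_card_CHAR_power[OF subfield] .
  then show ?thesis using card_F that by (simp flip: power_mult)
qed

lemma frobenius_add: "(x + y :: 'a) ^ (q ^ s) = x ^ (q ^ s) + y ^ (q ^ s)"
proof -
  obtain d where "q ^ s = CHAR('a) ^ d" by (rule q_power_eq_CHAR_power)
  then show ?thesis by (rule freshmans_dream'[OF prime_CHAR_finite])
qed

lemma frobenius_sum: "(sum f A :: 'a) ^ (q ^ s) = (\<Sum>i\<in>A. f i ^ (q ^ s))"
proof -
  obtain d where "q ^ s = CHAR('a) ^ d" by (rule q_power_eq_CHAR_power)
  then show ?thesis by (rule freshmans_dream_sum'[OF prime_CHAR_finite])
qed

lemma frobenius_diff: "(x - y :: 'a) ^ (q ^ s) = x ^ (q ^ s) - y ^ (q ^ s)"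
proof -
  have "x ^ (q ^ s) = (x - y) ^ (q ^ s) + y ^ (q ^ s)"
    using frobenius_add[of "x - y" y s] by simp
  then show ?thesis by (simp add: algebra_simps)
qed

lemma power_q_power_of_mem: "c \<in> F \<Longrightarrow> c ^ (q ^ s) = c"
  using subfield_power_card[OF subfield] card_F by (induction s) (simp_all add: power_mult)

lemma power_q_eq_self_iff: "x ^ q = x \<longleftrightarrow> x \<in> F"
  using subfield_eq_fixed_points[OF subfield] card_F by blast

end

lemma power_power_mult_fixed:
  fixes x :: "'a::monoid_mult"
  assumes "x ^ (b ^ e) = x" shows "x ^ (b ^ (e * t)) = x"
proof (induction t)
  case (Suc t)
  have "b ^ (e * Suc t) = b ^ (e * t) * b ^ e" by (simp add: power_add)
  then have "x ^ (b ^ (e * Suc t)) = (x ^ (b ^ (e * t))) ^ (b ^ e)" by (simp add: power_mult)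
  then show ?case using Suc assms by simp
qed simp

locale finite_field_extension = finite_subfield F q for F :: "'a::{field,finite} set" and q +
  fixes m :: nat
  assumes card_UNIV: "card (UNIV :: 'a set) = q ^ m"
begin

lemma m_ge_1: "m \<ge> 1"
  using card_UNIV_ge_2[where 'a='a] card_UNIV by (cases m) auto

lemma power_q_m: "(x :: 'a) ^ (q ^ m) = x"
  using subfield_power_card[OF subfield_UNIV, of x] card_UNIV by simp

lemma power_q_power_mod: "(x :: 'a) ^ (q ^ s) = x ^ (q ^ (s mod m))"
proof -
  have "x ^ (q ^ s) = (x ^ (q ^ (m * (s div m)))) ^ (q ^ (s mod m))"
    by (metis div_mult_mod_eq mult.commute power_add power_mult)
  then show ?thesis using power_power_mult_fixed[OF power_q_m] by simp
qed

text \<open>Bezout: \<open>e a = m b + 1\<close>, so \<open>x = x ^ (q ^ (e a)) = (x ^ (q ^ (m b))) ^ q = x ^ q\<close>.\<close>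
lemma mem_if_fixed_coprime_frobenius:
  assumes "coprime e m" and fixed: "(x :: 'a) ^ (q ^ e) = x" shows "x \<in> F"
proof (cases "e = 0")
  case True
  then have "m = 1" using assms(1) by simp
  then show ?thesis using power_q_m[of x] power_q_eq_self_iff by simp
next
  case False
  then obtain a b where "e * a = m * b + 1" using bezout_nat[of e m] assms(1) by auto
  then have "x ^ (q ^ (e * a)) = (x ^ (q ^ (m * b))) ^ q"
    by (simp only: power_add power_one_right power_mult)
  then have "x ^ q = x"
    using power_power_mult_fixed[OF fixed] power_power_mult_fixed[OF power_q_m] by simp
  then show ?thesis using power_q_eq_self_iff by simp
qed

end

section \<open>Rank of a vector\<close>

lemma rk_set_bounded:
  "{card S | S. S \<subseteq> {..<n} \<and> coords_indep K x S} \<subseteq> {..n}"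
  using card_mono[of "{..<n}"] by fastforce

lemma rk_obtain:
  obtains S where "S \<subseteq> {..<n}" "coords_indep K x S" "card S = rk K n x"
proof -
  let ?R = "{card S | S. S \<subseteq> {..<n} \<and> coords_indep K x S}"
  have "card {} \<in> ?R" by (intro CollectI exI[of _ "{}"]) (simp add: coords_indep_def)
  then have "Max ?R \<in> ?R" using rk_set_bounded by (intro Max_in) (auto intro: finite_subset)
  then show ?thesis using that unfolding rk_def by auto
qed

lemma rk_ge: "S \<subseteq> {..<n} \<Longrightarrow> coords_indep K x S \<Longrightarrow> card S \<le> rk K n x"
  unfolding rk_def using rk_set_bounded by (intro Max_ge) (auto intro: finite_subset)

lemma rk_cong: "(\<And>j. j < n \<Longrightarrow> x j = y j) \<Longrightarrow> rk K n x = rk K n y"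
proof -
  assume "\<And>j. j < n \<Longrightarrow> x j = y j"
  then have "S \<subseteq> {..<n} \<Longrightarrow> coords_indep K x S = coords_indep K y S" for S
    by (intro coords_indep_cong) auto
  then show ?thesis unfolding rk_def by metis
qed

lemma rk_le_Suc: "rk K n x \<le> rk K (Suc n) x"
  by (metis lessThan_Suc rk_ge rk_obtain subset_insertI2)

lemma rk_maximal_span:
  assumes "subfield K" "S \<subseteq> {..<n}" "coords_indep K x S" "card S = rk K n x" "j < n"
  shows "x j \<in> span_over K S x"
proof (rule ccontr)
  assume not_in: "x j \<notin> span_over K S x"
  have fin: "finite S" using assms(2) finite_subset by blast
  then have "j \<notin> S" using not_in span_over_base[OF assms(1) fin] by blast
  then have "card (insert j S) \<le> rk K n x"
    using assms not_in fin by (intro rk_ge coords_indep_insert) auto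
  then show False using assms(4) fin \<open>j \<notin> S\<close> by simp
qed

lemma rk_le_card_support:
  fixes x :: "nat \<Rightarrow> 'a::{field,finite}"
  assumes K: "subfield K" and T: "T \<subseteq> {..<n}" and zero: "\<And>j. j < n \<Longrightarrow> j \<notin> T \<Longrightarrow> x j = 0"
  shows "rk K n x \<le> card T"
proof -
  obtain S where S: "S \<subseteq> {..<n}" "coords_indep K x S" "card S = rk K n x" by (rule rk_obtain)
  have fin: "finite S" "finite T" using S(1) T finite_subset by blast+
  have "x j \<in> span_over K T x" if "j < n" for j
    using span_over_base[OF K fin(2)] subspace_over_span[OF K] zero that
    by (cases "j \<in> T") (auto simp: subspace_over_def)
  then have sub: "span_over K S x \<subseteq> span_over K T x"
    using S(1) by (intro span_over_subset subspace_over_span K) auto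
  have "card K ^ card S = card (span_over K S x)"
    using card_span_over[OF K finite fin(1) S(2)] by simp
  also have "\<dots> \<le> card (span_over K T x)" by (rule card_mono[OF finite sub])
  also have "\<dots> \<le> card K ^ card T" by (rule card_span_over_le[OF finite fin(2)])
  finally have "card S \<le> card T"
    by (rule power_le_imp_le_exp[rotated]) (use subfield_card_ge_2[OF K finite] in linarith)
  then show ?thesis using S(3) by simp
qed

lemma rk_zero_iff:
  fixes x :: "nat \<Rightarrow> 'a::{field,finite}"
  assumes "subfield K" shows "rk K n x = 0 \<longleftrightarrow> (\<forall>j<n. x j = 0)"
proof
  assume "rk K n x = 0"
  show "\<forall>j<n. x j = 0"
  proof (rule ccontr)
    assume "\<not> (\<forall>j<n. x j = 0)"
    then obtain j where "j < n" "x j \<noteq> 0" by blast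
    then have "card {j} \<le> rk K n x" by (intro rk_ge) (auto simp: coords_indep_def)
    then show False using \<open>rk K n x = 0\<close> by simp
  qed
qed (use rk_le_card_support[OF assms, of "{}" n x] in auto)

section \<open>Counting rank balls\<close>

fun qbinomial :: "nat \<Rightarrow> nat \<Rightarrow> nat \<Rightarrow> nat" where
  "qbinomial q 0 r = (if r = 0 then 1 else 0)"
| "qbinomial q (Suc n) 0 = 1"
| "qbinomial q (Suc n) (Suc r) = qbinomial q n r + q ^ Suc r * qbinomial q n (Suc r)"

lemma qbinomial_eq_0: "n < r \<Longrightarrow> qbinomial q n r = 0"
  by (induction q n r rule: qbinomial.induct) auto

lemma qbinomial_0_right [simp]: "qbinomial q n 0 = 1"
  by (cases n) auto

lemma qbinomial_diag [simp]: "qbinomial q n n = 1"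
  by (induction n) (auto simp: qbinomial_eq_0)

lemma bij_betw_restrict_vecs:
  "bij_betw (\<lambda>x. restrict x {..<n}) (vecs n :: (nat \<Rightarrow> 'a::zero) set) ({..<n} \<rightarrow>\<^sub>E UNIV)"
proof (rule bij_betw_byWitness[where f' = "\<lambda>x j. if j < n then x j else 0"])
  have "(if j < n then restrict x {..<n} j else 0) = x j" if "x \<in> vecs n" for x :: "nat \<Rightarrow> 'a" and j
    using that unfolding vecs_def by (cases "j < n") simp_all
  then show "\<forall>x\<in>vecs n :: (nat \<Rightarrow> 'a) set. (\<lambda>j. if j < n then restrict x {..<n} j else 0) = x"
    by (intro ballI ext)
  show "\<forall>x\<in>{..<n} \<rightarrow>\<^sub>E (UNIV :: 'a set). restrict (\<lambda>j. if j < n then x j else 0) {..<n} = x"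
    by (auto simp: PiE_def extensional_def fun_eq_iff)
  show "(\<lambda>x. restrict x {..<n}) ` (vecs n :: (nat \<Rightarrow> 'a) set) \<subseteq> {..<n} \<rightarrow>\<^sub>E UNIV"
    by (rule image_subsetI, rule iffD2[OF restrict_PiE_iff]) simp
  show "(\<lambda>x j. if j < n then x j else 0) ` ({..<n} \<rightarrow>\<^sub>E UNIV) \<subseteq> (vecs n :: (nat \<Rightarrow> 'a) set)"
    by (intro image_subsetI) (simp add: vecs_def)
qed

lemma finite_vecs: "finite (vecs n :: (nat \<Rightarrow> 'a::{zero,finite}) set)"
  using bij_betw_finite[OF bij_betw_restrict_vecs[where 'a='a]] by (simp add: finite_PiE)

lemma card_vecs: "card (vecs n :: (nat \<Rightarrow> 'a::{zero,finite}) set) = card (UNIV :: 'a set) ^ n"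
  using bij_betw_same_card[OF bij_betw_restrict_vecs[where 'a='a]] by (simp add: card_PiE)

definition rank_ball :: "'a::field set \<Rightarrow> nat \<Rightarrow> nat \<Rightarrow> (nat \<Rightarrow> 'a) set" where
  "rank_ball K n r = {x \<in> vecs n. rk K n x \<le> r}"

lemma finite_rank_ball: "finite (rank_ball K n r :: (nat \<Rightarrow> 'a::{field,finite}) set)"
  unfolding rank_ball_def by (rule finite_subset[OF _ finite_vecs]) blast

lemma rank_ball_0:
  fixes K :: "'a::{field,finite} set"
  assumes "subfield K" shows "rank_ball K n 0 = {\<lambda>_. 0}"
proof -
  have "x \<in> vecs n \<and> rk K n x = 0 \<longleftrightarrow> (\<forall>j. x j = 0)" for x :: "nat \<Rightarrow> 'a"
    unfolding vecs_def mem_Collect_eq rk_zero_iff[OF assms]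
    by (metis not_less)
  then show ?thesis unfolding rank_ball_def by (auto simp: fun_eq_iff)
qed

lemma rk_fun_upd_mem_span:
  assumes K: "subfield K" and S: "S \<subseteq> {..<n}" "coords_indep K y S" "card S = rk K n y"
    and rk: "rk K (Suc n) (y(n := a)) \<le> card S"
  shows "a \<in> span_over K S y"
proof (rule ccontr)
  assume a: "a \<notin> span_over K S y"
  let ?x = "y(n := a)"
  have fin: "finite S" and "n \<notin> S" using S(1) finite_subset by auto
  then have agree: "\<And>i. i \<in> S \<Longrightarrow> ?x i = y i" by auto
  have "coords_indep K ?x S" "?x n \<notin> span_over K S ?x"
    using S(2) a coords_indep_cong[of S ?x y K, OF agree] span_over_cong[of S ?x y K, OF agree]
    by simp_all
  then have "coords_indep K ?x (insert n S)" by (intro coords_indep_insert K fin \<open>n \<notin> S\<close>)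
  then have "card (insert n S) \<le> rk K (Suc n) ?x" using S(1) by (intro rk_ge) auto
  then show False using rk fin \<open>n \<notin> S\<close> by simp
qed

lemma rank_ball_Suc_subset:
  assumes K: "subfield K" and S: "\<And>y. S y \<subseteq> {..<n} \<and> coords_indep K y (S y) \<and> card (S y) = rk K n y"
  shows "rank_ball K (Suc n) (Suc r) \<subseteq> (\<lambda>(y, a). y(n := a)) ` (rank_ball K n r \<times> UNIV)
           \<union> (\<Union>y\<in>rank_ball K n (Suc r). (\<lambda>a. y(n := a)) ` span_over K (S y) y)"
proof
  fix x assume x: "x \<in> rank_ball K (Suc n) (Suc r)"
  define y where "y = x(n := 0)"
  have y: "y \<in> vecs n" "x = y(n := x n)"
    using x unfolding y_def rank_ball_def vecs_def by (auto simp: le_Suc_eq)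
  have rk_y: "rk K n y = rk K n x" unfolding y_def by (rule rk_cong) simp
  show "x \<in> (\<lambda>(y, a). y(n := a)) ` (rank_ball K n r \<times> UNIV)
           \<union> (\<Union>y\<in>rank_ball K n (Suc r). (\<lambda>a. y(n := a)) ` span_over K (S y) y)"
  proof (cases "rk K n y \<le> r")
    case True
    then have "y \<in> rank_ball K n r" using y(1) unfolding rank_ball_def by simp
    then show ?thesis using y(2) by (auto intro!: image_eqI[of _ _ "(y, x n)"])
  next
    case False
    moreover have "rk K (Suc n) x \<le> Suc r" using x unfolding rank_ball_def by simp
    ultimately have rk_Suc: "rk K n y = Suc r" using rk_y rk_le_Suc[of K n x] by linarith
    then have "x n \<in> span_over K (S y) y"
      using S[of y] x y(2) unfolding rank_ball_def by (intro rk_fun_upd_mem_span K) auto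
    moreover have "y \<in> rank_ball K n (Suc r)" using y(1) rk_Suc unfolding rank_ball_def by simp
    ultimately show ?thesis using y(2) by blast
  qed
qed

context finite_subfield
begin

lemma card_rank_ball_Suc:
  "card (rank_ball F (Suc n) (Suc r))
     \<le> card (UNIV :: 'a set) * card (rank_ball F n r) + q ^ Suc r * card (rank_ball F n (Suc r))"
proof -
  have "\<forall>y. \<exists>S. S \<subseteq> {..<n} \<and> coords_indep F y S \<and> card S = rk F n y" by (meson rk_obtain)
  then obtain S where S: "\<And>y. S y \<subseteq> {..<n} \<and> coords_indep F y (S y) \<and> card (S y) = rk F n y"
    by metis
  let ?A = "(\<lambda>(y, a). y(n := a)) ` (rank_ball F n r \<times> (UNIV :: 'a set))"
  let ?B = "\<Union>y\<in>rank_ball F n (Suc r). (\<lambda>a. y(n := a)) ` span_over F (S y) y"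
  have "card ?A \<le> card (rank_ball F n r \<times> (UNIV :: 'a set))"
    by (rule card_image_le) (simp add: finite_rank_ball)
  also have "\<dots> = card (UNIV :: 'a set) * card (rank_ball F n r)" by (simp add: card_cartesian_product)
  finally have A: "card ?A \<le> card (UNIV :: 'a set) * card (rank_ball F n r)" .
  have fin_S: "finite (S y)" for y using S[of y] finite_subset by blast
  have each: "card ((\<lambda>a. y(n := a)) ` span_over F (S y) y) \<le> q ^ Suc r"
    if "y \<in> rank_ball F n (Suc r)" for y
  proof -
    have "card ((\<lambda>a. y(n := a)) ` span_over F (S y) y) \<le> card (span_over F (S y) y)"
      by (rule card_image_le) (simp add: finite_span_over fin_S)
    also have "\<dots> \<le> q ^ card (S y)" using card_span_over_le[of F "S y" y, OF finite fin_S] card_F by simp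
    also have "\<dots> \<le> q ^ Suc r"
      using S[of y] that q_ge_2 unfolding rank_ball_def by (intro power_increasing) auto
    finally show ?thesis .
  qed
  have "card ?B \<le> (\<Sum>y\<in>rank_ball F n (Suc r). card ((\<lambda>a. y(n := a)) ` span_over F (S y) y))"
    by (rule card_UN_le[OF finite_rank_ball])
  also have "\<dots> \<le> (\<Sum>y\<in>rank_ball F n (Suc r). q ^ Suc r)" by (rule sum_mono) (rule each)
  finally have B: "card ?B \<le> q ^ Suc r * card (rank_ball F n (Suc r))" by (simp add: mult.commute)
  have "finite ?A" "finite ?B"
    by (simp_all add: finite_rank_ball finite_span_over fin_S)
  then have "card (rank_ball F (Suc n) (Suc r)) \<le> card (?A \<union> ?B)"
    by (intro card_mono rank_ball_Suc_subset[OF subfield S]) simp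
  also have "\<dots> \<le> card ?A + card ?B" by (rule card_Un_le)
  finally show ?thesis using A B by linarith
qed

lemma card_rank_ball_le:
  "r \<le> n \<Longrightarrow> card (rank_ball F n r) \<le> card (UNIV :: 'a set) ^ r * qbinomial q n r"
proof (induction n arbitrary: r)
  case 0
  then show ?case using rank_ball_0[OF subfield] by simp
next
  case (Suc n)
  show ?case
  proof (cases r)
    case 0
    then show ?thesis using rank_ball_0[OF subfield] by simp
  next
    case (Suc r')
    show ?thesis
    proof (cases "r = Suc n")
      case True
      have "card (rank_ball F (Suc n) r) \<le> card (vecs (Suc n) :: (nat \<Rightarrow> 'a) set)"
        unfolding rank_ball_def by (intro card_mono finite_vecs) auto
      then show ?thesis using True card_vecs[where 'a='a] by simp
    next
      case False
      then have "r \<le> n" using Suc.prems by simp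
      have "card (rank_ball F (Suc n) r)
          \<le> card (UNIV :: 'a set) * card (rank_ball F n r') + q ^ r * card (rank_ball F n r)"
        using card_rank_ball_Suc[of n r'] \<open>r = Suc r'\<close> by simp
      also have "\<dots> \<le> card (UNIV :: 'a set) * (card (UNIV :: 'a set) ^ r' * qbinomial q n r')
            + q ^ r * (card (UNIV :: 'a set) ^ r * qbinomial q n r)"
        using Suc.IH[of r'] Suc.IH[of r] \<open>r \<le> n\<close> \<open>r = Suc r'\<close>
        by (intro add_mono mult_left_mono) auto
      also have "\<dots> = card (UNIV :: 'a set) ^ r * qbinomial q (Suc n) r"
        using \<open>r = Suc r'\<close> by (simp add: algebra_simps)
      finally show ?thesis .
    qed
  qed
qed

end

section \<open>Estimating the Gaussian binomial coefficients\<close>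

lemma qbinomial_1_less: "q \<ge> 2 \<Longrightarrow> qbinomial q n 1 < q ^ n"
proof (induction n)
  case (Suc n)
  then have "q * Suc (qbinomial q n 1) \<le> q * q ^ n" by (intro mult_le_mono2) simp
  then show ?case using Suc.prems by simp
qed simp

lemma qbinomial_Suc_diag_less: "q \<ge> 2 \<Longrightarrow> qbinomial q (Suc n) n < q ^ Suc n"
proof (induction n)
  case (Suc n)
  have "qbinomial q (Suc (Suc n)) (Suc n) = qbinomial q (Suc n) n + q ^ Suc n" by simp
  also have "\<dots> < 2 * q ^ Suc n" using Suc by simp
  also have "\<dots> \<le> q * q ^ Suc n" using Suc.prems by (intro mult_right_mono) auto
  finally show ?case by simp
qed simp

lemma qbinomial_less_if_extreme:
  assumes q: "q \<ge> 2" and "1 \<le> m" "n \<le> m" and r: "r \<in> {0, 1, n - 1}"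
  shows "qbinomial q n r < q ^ m"
proof -
  have "q ^ n \<le> q ^ m" using assms by (intro power_increasing) auto
  moreover have "1 < q ^ m" using q \<open>1 \<le> m\<close> by (intro one_less_power) auto
  moreover have "n = Suc (n - 1)" if "n \<noteq> 0" using that by simp
  ultimately show ?thesis
    using r qbinomial_1_less[OF q, of n] qbinomial_Suc_diag_less[OF q, of "n - 1"]
    by (cases "n = 0") (auto simp: qbinomial_eq_0)
qed

lemma qbinomial_mult_prod:
  "real (qbinomial q n r) * (\<Prod>i<r. real q ^ Suc i - 1) = (\<Prod>i<r. real q ^ (n - i) - 1)"
proof (induction q n r rule: qbinomial.induct)
  case (1 q r)
  then show ?case by (cases r) (auto intro!: prod_zero)
next
  case (3 q n r)
  define D where "D r = (\<Prod>i<r. real q ^ Suc i - 1)" for r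
  define N where "N n r = (\<Prod>i<r. real q ^ (n - i) - 1)" for n r
  have IH: "real (qbinomial q n r) * D r = N n r"
    "real (qbinomial q n (Suc r)) * D (Suc r) = N n (Suc r)"
    using 3 unfolding D_def N_def by blast+
  have D_Suc: "D (Suc r) = D r * (real q ^ Suc r - 1)"
    and N_Suc: "N n (Suc r) = N n r * (real q ^ (n - r) - 1)"
    unfolding D_def N_def by simp_all
  have "real (qbinomial q (Suc n) (Suc r)) * D (Suc r)
      = real (qbinomial q n r) * D r * (real q ^ Suc r - 1)
        + real q ^ Suc r * (real (qbinomial q n (Suc r)) * D (Suc r))"
    by (simp add: D_Suc algebra_simps)
  also have "\<dots> = N n r * (real q ^ Suc r - 1) + real q ^ Suc r * (N n r * (real q ^ (n - r) - 1))"
    using IH N_Suc by simp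
  also have "\<dots> = (real q ^ Suc n - 1) * N n r"
  proof (cases "r \<le> n")
    case True
    then have pow: "real q ^ Suc r * real q ^ (n - r) = real q ^ Suc n" by (simp flip: power_add)
    have "N n r * (real q ^ Suc r - 1) + real q ^ Suc r * (N n r * (real q ^ (n - r) - 1))
        = N n r * (real q ^ Suc r * real q ^ (n - r) - 1)" by (simp add: algebra_simps)
    then show ?thesis unfolding pow by (simp add: mult.commute)
  next
    case False
    then have "N n r = 0" unfolding N_def by (intro prod_zero) (auto intro!: bexI[of _ n])
    then show ?thesis by simp
  qed
  also have "\<dots> = N (Suc n) (Suc r)" unfolding N_def by (subst prod.lessThan_Suc_shift) simp
  finally show ?case unfolding D_def N_def .
qed simp

lemma prod_power_diff:
  fixes x :: real
  shows "r \<le> n \<Longrightarrow> (\<Prod>i<r. x ^ (n - i)) = x ^ (r * (n - r)) * (\<Prod>i<r. x ^ Suc i)"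
proof (induction r)
  case (Suc r)
  then obtain k where n: "n = r + 1 + k" by (metis Suc_eq_plus1 le_iff_add)
  have "(\<Prod>i<Suc r. x ^ (n - i)) = x ^ (r * (n - r)) * (\<Prod>i<r. x ^ Suc i) * x ^ (n - r)"
    using Suc by simp
  also have "\<dots> = x ^ (r * (n - r) + (n - r)) * (\<Prod>i<r. x ^ Suc i)" by (simp add: power_add)
  also have "r * (n - r) + (n - r) = Suc r * (n - Suc r) + Suc r" unfolding n by (simp add: algebra_simps)
  also have "x ^ (Suc r * (n - Suc r) + Suc r) * (\<Prod>i<r. x ^ Suc i)
      = x ^ (Suc r * (n - Suc r)) * (\<Prod>i<Suc r. x ^ Suc i)" by (simp add: power_add)
  finally show ?case .
qed simp

lemma qbinomial_le_prod:
  assumes q: "q \<ge> 2" and "r \<le> n"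
  shows "real (qbinomial q n r) \<le> real q ^ (r * (n - r)) * (\<Prod>i<r. real q ^ Suc i / (real q ^ Suc i - 1))"
proof -
  have ge_1: "real q ^ k \<ge> 1" for k using q by simp
  have pos: "real q ^ Suc i - 1 > 0" for i
    using q one_less_power[of "real q" "Suc i"] by simp
  then have D: "(\<Prod>i<r. real q ^ Suc i - 1) > 0" by (simp add: prod_pos)
  have "real (qbinomial q n r) = (\<Prod>i<r. real q ^ (n - i) - 1) / (\<Prod>i<r. real q ^ Suc i - 1)"
    unfolding qbinomial_mult_prod[symmetric] using D by (simp only: nonzero_mult_div_cancel_right less_irrefl)
  also have "\<dots> \<le> (\<Prod>i<r. real q ^ (n - i)) / (\<Prod>i<r. real q ^ Suc i - 1)"
    using ge_1 D by (intro divide_right_mono prod_mono) auto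
  also have "\<dots> = real q ^ (r * (n - r)) * (\<Prod>i<r. real q ^ Suc i / (real q ^ Suc i - 1))"
    using prod_power_diff[OF assms(2), of "real q"] by (simp add: prod_dividef)
  finally show ?thesis .
qed

lemma neg_ln_one_minus_sums:
  fixes y :: real assumes y: "0 \<le> y" "y < 1"
  shows "(\<lambda>k. y ^ Suc k / real (Suc k)) sums (- ln (1 - y))"
proof -
  have "summable (\<lambda>k. y * y ^ k)" using y by (intro summable_mult summable_geometric) simp
  then have sm: "summable (\<lambda>k. y ^ Suc k / real (Suc k))"
  proof (rule summable_comparison_test')
    fix k :: nat
    have "y ^ Suc k / real (Suc k) \<le> y ^ Suc k / 1" using y by (intro divide_left_mono) auto
    then show "norm (y ^ Suc k / real (Suc k)) \<le> y * y ^ k" using y by simp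
  qed
  have terms: "(\<lambda>k. (-1) ^ k * (1 / real (k + 1)) * ((1 - y) - 1) ^ Suc k)
      = (\<lambda>k. - (y ^ Suc k / real (Suc k)))"
  proof
    fix k
    have sign: "(-1::real) ^ k * (- y) ^ k = y ^ k" by (simp add: power_mult_distrib[symmetric])
    have "(-1) ^ k * (1 / real (k + 1)) * ((1 - y) - 1) ^ Suc k = - (y * ((-1) ^ k * (- y) ^ k)) / real (k + 1)"
      by (simp add: algebra_simps)
    then show "(-1) ^ k * (1 / real (k + 1)) * ((1 - y) - 1) ^ Suc k = - (y ^ Suc k / real (Suc k))"
      unfolding sign by simp
  qed
  have "ln (1 - y) = (\<Sum>k. (-1) ^ k * (1 / real (k + 1)) * ((1 - y) - 1) ^ Suc k)"
    using y by (intro ln_series) auto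
  also have "\<dots> = (\<Sum>k. - (y ^ Suc k / real (Suc k)))" unfolding terms ..
  also have "\<dots> = - (\<Sum>k. y ^ Suc k / real (Suc k))" by (rule suminf_minus[OF sm])
  finally show ?thesis using summable_sums[OF sm] by simp
qed

lemma summable_sigma_series:
  assumes "q \<ge> 2" shows "summable (\<lambda>k. 1 / (real (Suc k) * (real q ^ Suc k - 1)))"
proof (rule summable_comparison_test'[OF summable_geometric[of "1/2 :: real"]])
  fix k :: nat
  have "(2::real) ^ Suc k \<le> real q ^ Suc k" using assms by (intro power_mono) auto
  then have b: "real q ^ Suc k - 1 \<ge> 2 ^ k"
    using one_le_power[of "2::real" k] by (simp only: power_Suc) linarith
  have pos: "real q ^ Suc k - 1 > 0" using b by (smt (verit) zero_less_power)
  have "1 / (real (Suc k) * (real q ^ Suc k - 1)) = (1 / (real q ^ Suc k - 1)) / real (Suc k)" by simp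
  also have "\<dots> \<le> 1 / (real q ^ Suc k - 1)" using pos by (simp add: divide_le_eq)
  also have "\<dots> \<le> 1 / 2 ^ k" using b pos by (intro divide_left_mono) simp_all
  finally show "norm (1 / (real (Suc k) * (real q ^ Suc k - 1))) \<le> (1/2) ^ k"
    using pos by (simp add: power_one_over)
qed simp

lemma sum_power_Suc_less:
  fixes z :: real assumes "0 < z" "z < 1"
  shows "(\<Sum>i<r. z ^ Suc i) < z / (1 - z)"
proof -
  have "(\<Sum>i<r. z ^ Suc i) = z * (1 - z ^ r) / (1 - z)"
    using assms by (simp add: sum_distrib_left[symmetric] geometric_sum field_simps)
  also have "\<dots> < z / (1 - z)" using assms by (intro divide_strict_right_mono) auto
  finally show ?thesis .
qed

lemma ln_prod_qfactor_sums:
  assumes q: "q \<ge> 2"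
  shows "(\<lambda>k. \<Sum>i<r. (1 / real q ^ Suc i) ^ Suc k / real (Suc k))
           sums ln (\<Prod>i<r. real q ^ Suc i / (real q ^ Suc i - 1))"
proof -
  define y where "y i = 1 / real q ^ Suc i" for i
  have "real q ^ Suc i > 1" for i using q one_less_power[of "real q" "Suc i"] by simp
  then have y: "0 < y i" "y i < 1"
    and factor: "real q ^ Suc i / (real q ^ Suc i - 1) = 1 / (1 - y i)" for i
    using q unfolding y_def by (auto simp: field_simps)
  have "(\<lambda>k. \<Sum>i<r. y i ^ Suc k / real (Suc k)) sums (\<Sum>i<r. - ln (1 - y i))"
    using y by (intro sums_sum neg_ln_one_minus_sums) (auto intro: less_imp_le)
  also have "(\<Sum>i<r. - ln (1 - y i)) = ln (\<Prod>i<r. real q ^ Suc i / (real q ^ Suc i - 1))"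
  proof -
    have "ln (1 / (1 - y i)) = - ln (1 - y i)" "1 / (1 - y i) \<noteq> 0" for i
      using y[of i] by (simp_all add: ln_div)
    then show ?thesis unfolding factor by (simp add: ln_prod)
  qed
  finally show ?thesis unfolding y_def .
qed

lemma sum_qfactor_series_term_less:
  assumes q: "q \<ge> 2"
  shows "(\<Sum>i<r. (1 / real q ^ Suc i) ^ Suc k / real (Suc k)) < 1 / (real (Suc k) * (real q ^ Suc k - 1))"
proof -
  define z where "z = 1 / real q ^ Suc k"
  have gt_1: "real q ^ Suc k > 1" using q one_less_power[of "real q" "Suc k"] by simp
  then have z: "0 < z" "z < 1" using q unfolding z_def by auto
  have "(1 / real q ^ Suc i) ^ Suc k = z ^ Suc i" for i
  proof -
    have "(real q ^ Suc i) ^ Suc k = (real q ^ Suc k) ^ Suc i"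
      by (simp only: power_mult[symmetric] mult.commute)
    then show ?thesis unfolding z_def by (simp only: power_one_over)
  qed
  then have "(\<Sum>i<r. (1 / real q ^ Suc i) ^ Suc k / real (Suc k)) = (\<Sum>i<r. z ^ Suc i) / real (Suc k)"
    by (simp add: sum_divide_distrib)
  also have "\<dots> < z / (1 - z) / real (Suc k)" by (intro divide_strict_right_mono sum_power_Suc_less z) simp
  also have "\<dots> = 1 / (real (Suc k) * (real q ^ Suc k - 1))"
    unfolding z_def using gt_1 q by (simp add: field_simps)
  finally show ?thesis .
qed

text \<open>Expanding \<open>ln (q^i / (q^i - 1)) = \<Sum>k. q^(-i k) / k\<close> and swapping the order of
  summation, each inner geometric sum over \<open>i < r\<close> stays below \<open>1 / (q^k - 1)\<close>.\<close>
lemma prod_qfactor_less_exp_sigma: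
  assumes q: "q \<ge> 2"
  shows "(\<Prod>i<r. real q ^ Suc i / (real q ^ Suc i - 1))
           < exp (\<Sum>k. 1 / (real (Suc k) * (real q ^ Suc k - 1)))"
proof -
  define f where "f k = (\<Sum>i<r. (1 / real q ^ Suc i) ^ Suc k / real (Suc k))" for k
  define g where "g k = 1 / (real (Suc k) * (real q ^ Suc k - 1))" for k
  have f: "f sums ln (\<Prod>i<r. real q ^ Suc i / (real q ^ Suc i - 1))"
    unfolding f_def by (rule ln_prod_qfactor_sums[OF q])
  have sg: "summable g" unfolding g_def by (rule summable_sigma_series[OF q])
  have sf: "summable f" by (rule sums_summable[OF f])
  have "0 < suminf (\<lambda>k. g k - f k)"
    using sum_qfactor_series_term_less[OF q] unfolding f_def g_def
    by (intro suminf_pos summable_diff sg[unfolded g_def] sf[unfolded f_def]) simp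
  also have "suminf (\<lambda>k. g k - f k) = suminf g - suminf f" by (rule suminf_diff[OF sg sf, symmetric])
  finally have "ln (\<Prod>i<r. real q ^ Suc i / (real q ^ Suc i - 1)) < suminf g"
    using sums_unique[OF f] by simp
  moreover have "real q ^ Suc i > 1" for i using q one_less_power[of "real q" "Suc i"] by simp
  then have "(\<Prod>i<r. real q ^ Suc i / (real q ^ Suc i - 1)) > 0"
    using q by (intro prod_pos divide_pos_pos) (auto simp del: power_Suc)
  ultimately show ?thesis unfolding g_def by (metis exp_less_cancel_iff exp_ln)
qed

lemma qbinomial_less_if_sigma:
  assumes q: "q \<ge> 2" and "r \<le> n" and sigma: "real (r * (n - r)) \<le> real m - sigma q"
  shows "qbinomial q n r < q ^ m"
proof -
  define S where "S = (\<Sum>k. 1 / (real (Suc k) * (real q ^ Suc k - 1)))"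
  have lq: "ln (real q) > 0" using q by simp
  have "real (r * (n - r)) * ln (real q) \<le> (real m - sigma q) * ln (real q)"
    using sigma lq by (intro mult_right_mono) auto
  then have exponent: "real (r * (n - r)) * ln (real q) \<le> real m * ln (real q) - S"
    using lq unfolding sigma_def S_def by (simp add: algebra_simps)
  have power_eq: "real q ^ k = exp (real k * ln (real q))" for k
    using q by (simp add: exp_of_nat_mult)
  have "real (qbinomial q n r) \<le> real q ^ (r * (n - r)) * (\<Prod>i<r. real q ^ Suc i / (real q ^ Suc i - 1))"
    by (rule qbinomial_le_prod[OF assms(1,2)])
  also have "\<dots> < real q ^ (r * (n - r)) * exp S"
    unfolding S_def using q by (intro mult_strict_left_mono prod_qfactor_less_exp_sigma) auto
  also have "\<dots> \<le> exp (real m * ln (real q) - S) * exp S"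
    unfolding power_eq[of "r * (n - r)"] using exponent by (intro mult_right_mono) auto
  also have "\<dots> = real q ^ m" unfolding power_eq[of m] by (simp add: exp_diff)
  finally show ?thesis by (metis of_nat_less_imp_less of_nat_power)
qed

section \<open>Linear codes and the rank covering radius\<close>

lemma sum_fun_apply: "(\<Sum>a\<in>A. f a) x = (\<Sum>a\<in>A. f a x)"
  by (induction A rule: infinite_finite_induct) (auto simp: plus_fun_def zero_fun_def)

definition scale_vec :: "'a::field \<Rightarrow> (nat \<Rightarrow> 'a) \<Rightarrow> (nat \<Rightarrow> 'a)" where
  "scale_vec a v = (\<lambda>j. a * v j)"

interpretation vec: vector_space "scale_vec :: 'a::field \<Rightarrow> (nat \<Rightarrow> 'a) \<Rightarrow> (nat \<Rightarrow> 'a)"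
  by unfold_locales (auto simp: fun_eq_iff algebra_simps plus_fun_def scale_vec_def)

lemma sum_scale_vec: "(\<Sum>v\<in>S. scale_vec (u v) v) = (\<lambda>j. \<Sum>v\<in>S. u v * v j)"
  by (rule ext) (simp add: sum_fun_apply scale_vec_def)

lemma vec_span_eq_span: "finite B \<Longrightarrow> vec_span B = vec.span B"
  unfolding vec_span_def vec.span_finite by (auto simp: sum_scale_vec)

lemma independent_if_vec_indep: "finite B \<Longrightarrow> vec_indep UNIV B \<Longrightarrow> vec.independent B"
  by (rule vec.independent_if_scalars_zero)
    (auto simp: vec_indep_def sum_scale_vec fun_eq_iff)

definition unit_vec :: "nat \<Rightarrow> nat \<Rightarrow> 'a::field" where
  "unit_vec j = (\<lambda>i. if i = j then 1 else 0)"

lemma inj_unit_vec: "inj (unit_vec :: nat \<Rightarrow> nat \<Rightarrow> 'a::field)"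
  by (rule injI) (metis unit_vec_def zero_neq_one)

lemma vecs_subset_span_unit_vecs: "vecs n \<subseteq> vec.span (unit_vec ` {..<n})"
proof
  fix x :: "nat \<Rightarrow> 'a" assume x: "x \<in> vecs n"
  have "x = (\<Sum>j<n. scale_vec (x j) (unit_vec j))"
  proof
    fix i
    have "(\<Sum>j<n. scale_vec (x j) (unit_vec j)) i = (\<Sum>j<n. x j * (if i = j then 1 else 0))"
      by (simp add: sum_fun_apply scale_vec_def unit_vec_def)
    also have "\<dots> = (\<Sum>j<n. if j = i then x j else 0)" by (rule sum.cong) auto
    also have "\<dots> = x i" using x by (simp add: vecs_def)
    finally show "x i = (\<Sum>j<n. scale_vec (x j) (unit_vec j)) i" by simp
  qed
  also have "\<dots> \<in> vec.span (unit_vec ` {..<n})"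
    by (intro vec.span_sum vec.span_scale vec.span_base) auto
  finally show "x \<in> vec.span (unit_vec ` {..<n})" .
qed

lemma span_unit_vecs_vanish:
  fixes x :: "nat \<Rightarrow> 'a::field"
  assumes "x \<in> vec.span (unit_vec ` T)" "j \<notin> T" shows "x j = 0"
proof -
  let ?V = "{x :: nat \<Rightarrow> 'a. \<forall>j. j \<notin> T \<longrightarrow> x j = 0}"
  have "vec.subspace ?V" by (auto simp: vec.subspace_def scale_vec_def)
  moreover have "unit_vec ` T \<subseteq> ?V" by (auto simp: unit_vec_def)
  ultimately have "vec.span (unit_vec ` T) \<subseteq> ?V" by (intro vec.span_minimal)
  then have "x \<in> ?V" using assms(1) by (rule subsetD)
  then show ?thesis using assms(2) by simp
qed

text \<open>Extend a basis \<open>B\<close> of the code by unit vectors \<open>unit_vec j\<close>, \<open>j \<in> T\<close>, to a basis of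
  the whole space: every word then differs from a codeword only in the coordinates \<open>T\<close>.\<close>
lemma codeword_differing_on_few_coords:
  assumes B: "finite B" "B \<subseteq> vecs n" "vec_indep UNIV B" and x: "x \<in> vecs n"
  obtains c T where "c \<in> vec_span B" "T \<subseteq> {..<n}" "card T + card B \<le> n"
    "\<And>j. j < n \<Longrightarrow> j \<notin> T \<Longrightarrow> x j = c j"
proof -
  define E where "E = (unit_vec ` {..<n} :: (nat \<Rightarrow> 'a) set)"
  have card_unit_vecs: "card (unit_vec ` S :: (nat \<Rightarrow> 'a) set) = card S" for S
    by (rule card_image[OF inj_on_subset[OF inj_unit_vec subset_UNIV]])
  obtain B' where B': "B \<subseteq> B'" "B' \<subseteq> B \<union> E" "vec.independent B'" "B \<union> E \<subseteq> vec.span B'"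
    by (rule vec.maximal_independent_subset_extend[OF Un_upper1 independent_if_vec_indep[OF B(1,3)]])
  define T where "T = {j. j < n \<and> unit_vec j \<in> B' - B}"
  have B'_eq: "B' = B \<union> unit_vec ` T" and disj: "B \<inter> unit_vec ` T = {}"
    using B'(1,2) unfolding T_def E_def by blast+
  have "B' \<subseteq> vec.span E"
    using B'(2) B(2) vecs_subset_span_unit_vecs unfolding E_def by (blast intro: vec.span_base)
  then have "card B' \<le> card E" using vec.independent_span_bound[OF _ B'(3)] unfolding E_def by blast
  also have "card E = n" unfolding E_def card_unit_vecs by simp
  also have "card B' = card B + card T"
    unfolding B'_eq using card_Un_disjoint[OF B(1) _ disj] by (simp add: T_def card_unit_vecs)
  finally have card: "card T + card B \<le> n" by simp
  have "x \<in> vec.span E" using vecs_subset_span_unit_vecs x unfolding E_def by blast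
  also have "\<dots> \<subseteq> vec.span B'" using B'(4) by (simp add: vec.span_minimal)
  finally obtain a b where ab: "x = a + b" "a \<in> vec.span B" "b \<in> vec.span (unit_vec ` T)"
    unfolding B'_eq vec.span_Un by blast
  show ?thesis
  proof
    show "a \<in> vec_span B" using ab(2) vec_span_eq_span[OF B(1)] by simp
    show "T \<subseteq> {..<n}" unfolding T_def by auto
    show "x j = a j" if "j \<notin> T" for j using ab span_unit_vecs_vanish[OF ab(3) that] by simp
  qed (rule card)
qed

lemma vec_span_subset_vecs: "B \<subseteq> vecs n \<Longrightarrow> vec_span B \<subseteq> vecs n"
  unfolding vec_span_def vecs_def by (auto intro!: sum.neutral)

lemma zero_in_vec_span: "(\<lambda>_. 0) \<in> vec_span B"
  unfolding vec_span_def by (intro CollectI exI[of _ "\<lambda>_. 0"]) simp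

lemma card_vec_span:
  assumes "finite B" "vec_indep UNIV B"
  shows "card (vec_span B :: (nat \<Rightarrow> 'a::{field,finite}) set) = card (UNIV :: 'a set) ^ card B"
proof -
  have "inj_on (\<lambda>c j. \<Sum>b\<in>B. c b * b j) (B \<rightarrow>\<^sub>E (UNIV :: 'a set))"
  proof (rule inj_onI)
    fix c d :: "(nat \<Rightarrow> 'a) \<Rightarrow> 'a" assume "c \<in> B \<rightarrow>\<^sub>E UNIV" "d \<in> B \<rightarrow>\<^sub>E UNIV"
      and eq: "(\<lambda>j. \<Sum>b\<in>B. c b * b j) = (\<lambda>j. \<Sum>b\<in>B. d b * b j)"
    have "\<forall>j. (\<Sum>b\<in>B. (c b - d b) * b j) = 0"
      using eq by (simp add: fun_eq_iff algebra_simps sum_subtractf)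
    then have "\<forall>b\<in>B. c b - d b = 0"
      using assms(2)[unfolded vec_indep_def, rule_format, of "\<lambda>b. c b - d b"] by simp
    then show "c = d" using \<open>c \<in> _\<close> \<open>d \<in> _\<close> by (intro PiE_ext) auto
  qed
  moreover have "vec_span B = (\<lambda>c j. \<Sum>b\<in>B. c b * b j) ` (B \<rightarrow>\<^sub>E UNIV)"
    unfolding vec_span_def by (auto intro!: image_eqI[of _ _ "restrict _ B"])
  ultimately show ?thesis using assms(1) by (simp add: card_image card_PiE)
qed

lemma linear_code_basics:
  fixes C :: "(nat \<Rightarrow> 'a::{field,finite}) set"
  assumes "linear_code n k C"
  shows "C \<subseteq> vecs n" "(\<lambda>_. 0) \<in> C" "finite C" "card C = card (UNIV :: 'a set) ^ k" "k \<le> n"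
proof -
  obtain B where B: "finite B" "card B = k" "B \<subseteq> vecs n" "vec_indep UNIV B" "C = vec_span B"
    using assms unfolding linear_code_def by blast
  show sub: "C \<subseteq> vecs n" using vec_span_subset_vecs[OF B(3)] B(5) by simp
  show "(\<lambda>_. 0) \<in> C" using zero_in_vec_span B(5) by simp
  show fin: "finite C" using sub finite_vecs finite_subset by blast
  show card: "card C = card (UNIV :: 'a set) ^ k" using card_vec_span[OF B(1,4)] B by simp
  have "card C \<le> card (vecs n :: (nat \<Rightarrow> 'a) set)" by (rule card_mono[OF finite_vecs sub])
  then show "k \<le> n"
    unfolding card card_vecs using card_UNIV_ge_2[where 'a='a] by (simp add: power_le_imp_le_exp)
qed

lemma rank_covering_radius_le:
  assumes "finite C" "C \<noteq> {}" and close: "\<And>x. x \<in> vecs n \<Longrightarrow> \<exists>c\<in>C. rank_dist K n x c \<le> t"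
  shows "rank_covering_radius K n (C :: (nat \<Rightarrow> 'a::{field,finite}) set) \<le> t"
  unfolding rank_covering_radius_def
proof (rule Max.boundedI)
  show "finite ((\<lambda>x. Min ((\<lambda>c. rank_dist K n x c) ` C)) ` vecs n)" by (intro finite_imageI finite_vecs)
  have "(\<lambda>_. 0) \<in> vecs n" by (simp add: vecs_def)
  then show "(\<lambda>x. Min ((\<lambda>c. rank_dist K n x c) ` C)) ` vecs n \<noteq> {}" by blast
next
  fix a assume "a \<in> (\<lambda>x. Min ((\<lambda>c. rank_dist K n x c) ` C)) ` vecs n"
  then obtain x where x: "x \<in> vecs n" "a = Min ((\<lambda>c. rank_dist K n x c) ` C)" by blast
  obtain c where "c \<in> C" "rank_dist K n x c \<le> t" using close[OF x(1)] by blast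
  then show "a \<le> t" unfolding x(2) using assms(1) by (meson Min_le finite_imageI image_eqI order_trans)
qed

lemma rank_covering_radius_attained:
  assumes "finite C" "C \<noteq> {}" "x \<in> vecs n"
  obtains c where "c \<in> C" "rank_dist K n x c \<le> rank_covering_radius K n (C :: (nat \<Rightarrow> 'a::{field,finite}) set)"
proof -
  have "Min ((\<lambda>c. rank_dist K n x c) ` C) \<in> (\<lambda>c. rank_dist K n x c) ` C"
    using assms(1,2) by (intro Min_in) auto
  then obtain c where "c \<in> C" "Min ((\<lambda>c. rank_dist K n x c) ` C) = rank_dist K n x c" by auto
  moreover have "Min ((\<lambda>c. rank_dist K n x c) ` C) \<le> rank_covering_radius K n C"
    unfolding rank_covering_radius_def using assms(3) finite_vecs by (intro Max_ge) auto
  ultimately show ?thesis using that by auto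
qed

lemma rank_covering_radius_ge:
  assumes "finite C" "C \<noteq> {}" "x \<in> vecs n" "\<And>c. c \<in> C \<Longrightarrow> t \<le> rank_dist K n x c"
  shows "t \<le> rank_covering_radius K n (C :: (nat \<Rightarrow> 'a::{field,finite}) set)"
proof -
  obtain c where "c \<in> C" "rank_dist K n x c \<le> rank_covering_radius K n C"
    by (rule rank_covering_radius_attained[OF assms(1-3)])
  then show ?thesis using assms(4) by fastforce
qed

lemma rank_covering_radius_le_redundancy:
  fixes C :: "(nat \<Rightarrow> 'a::{field,finite}) set"
  assumes K: "subfield K" and C: "linear_code n k C"
  shows "rank_covering_radius K n C \<le> n - k"
proof (rule rank_covering_radius_le)
  show "finite C" "C \<noteq> {}" using linear_code_basics[OF C] by auto
  obtain B where B: "finite B" "card B = k" "B \<subseteq> vecs n" "vec_indep UNIV B" "C = vec_span B"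
    using C unfolding linear_code_def by blast
  fix x :: "nat \<Rightarrow> 'a" assume "x \<in> vecs n"
  then obtain c T where cT: "c \<in> vec_span B" "T \<subseteq> {..<n}" "card T + card B \<le> n"
    "\<And>j. j < n \<Longrightarrow> j \<notin> T \<Longrightarrow> x j = c j"
    using codeword_differing_on_few_coords[OF B(1,3,4)] by blast
  have "rank_dist K n x c \<le> card T"
    unfolding rank_dist_def using cT(4) by (intro rk_le_card_support[OF K cT(2)]) simp
  then show "\<exists>c\<in>C. rank_dist K n x c \<le> n - k" using cT(1,3) B(2,5) by (intro bexI[of _ c]) auto
qed

context finite_subfield
begin

text \<open>Sphere-covering bound: the rank balls of radius \<open>\<rho>\<close> around the \<open>|'a|^k\<close> codewords
  cover all \<open>|'a|^n\<close> words.\<close>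
lemma sphere_covering_bound:
  assumes C: "linear_code n k C" and rho: "\<rho> = rank_covering_radius F n C"
    and small: "qbinomial q n \<rho> < card (UNIV :: 'a set)"
  shows "n \<le> k + \<rho>"
proof (rule ccontr)
  let ?N = "card (UNIV :: 'a set)"
  assume "\<not> n \<le> k + \<rho>"
  have basics: "finite C" "C \<noteq> {}" "C \<subseteq> vecs n" "card C = ?N ^ k"
    using linear_code_basics[OF C] by auto
  have "\<rho> \<le> n" using rank_covering_radius_le_redundancy[OF subfield C] rho by simp
  have cover: "vecs n \<subseteq> (\<lambda>(c, z) j. c j + z j) ` (C \<times> rank_ball F n \<rho>)"
  proof
    fix x :: "nat \<Rightarrow> 'a" assume x: "x \<in> vecs n"
    obtain c where c: "c \<in> C" "rank_dist F n x c \<le> \<rho>"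
      using rank_covering_radius_attained[OF basics(1,2) x] rho by blast
    have "(\<lambda>j. x j - c j) \<in> rank_ball F n \<rho>"
      using x c basics(3) unfolding rank_ball_def rank_dist_def vecs_def by auto
    then show "x \<in> (\<lambda>(c, z) j. c j + z j) ` (C \<times> rank_ball F n \<rho>)"
      using c(1) by (intro image_eqI[of _ _ "(c, \<lambda>j. x j - c j)"]) auto
  qed
  have "?N ^ n = card (vecs n :: (nat \<Rightarrow> 'a) set)" by (simp add: card_vecs)
  also have "\<dots> \<le> card ((\<lambda>(c, z) j. c j + z j) ` (C \<times> rank_ball F n \<rho>))"
    by (rule card_mono[OF _ cover]) (simp add: basics(1) finite_rank_ball)
  also have "\<dots> \<le> card (C \<times> rank_ball F n \<rho>)"
    by (rule card_image_le) (simp add: basics(1) finite_rank_ball)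
  also have "\<dots> = card C * card (rank_ball F n \<rho>)" by (rule card_cartesian_product)
  also have "\<dots> \<le> ?N ^ k * (?N ^ \<rho> * qbinomial q n \<rho>)"
    using basics(4) card_rank_ball_le[OF \<open>\<rho> \<le> n\<close>] by simp
  also have "\<dots> < ?N ^ k * (?N ^ \<rho> * ?N)" using small by simp
  also have "\<dots> = ?N ^ (k + \<rho> + 1)" by (simp add: power_add)
  also have "\<dots> \<le> ?N ^ n"
    using \<open>\<not> n \<le> k + \<rho>\<close> card_UNIV_ge_2[where 'a='a] by (intro power_increasing) auto
  finally show False by simp
qed

lemma card_subspace_ge_indep:
  assumes "coords_indep F y I" "finite I" "subspace_over F V" "\<And>i. i \<in> I \<Longrightarrow> y i \<in> V"
  shows "q ^ card I \<le> card V"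
proof -
  have "q ^ card I = card (span_over F I y)" using card_span_over[OF subfield finite assms(2,1)] card_F by simp
  also have "\<dots> \<le> card V" by (rule card_mono[OF finite span_over_subset[OF assms(3,4)]])
  finally show ?thesis .
qed

end

context finite_field_extension
begin

lemma exists_coords_indep: "n \<le> m \<Longrightarrow> \<exists>h. coords_indep F h {..<n}"
proof -
  assume "n \<le> m"
  have "subspace_over F (UNIV :: 'a set)" by (simp add: subspace_over_def)
  then obtain d y where "\<forall>i<d. y i \<in> UNIV" and y: "coords_indep F y {..<d}" "span_over F {..<d} y = UNIV"
    by (rule subspace_over_basis[OF subfield finite _ finite_UNIV])
  then have "q ^ d = q ^ m" using card_span_over[OF subfield finite _ y(1)] card_UNIV card_F by simp
  then have "d = m" using q_ge_2 by (simp add: power_inject_exp)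
  then show ?thesis using coords_indep_subset[OF y(1) _ _ subfield] \<open>n \<le> m\<close> by auto
qed

text \<open>The coordinates of \<open>\<Sum>b\<in>Be. \<alpha> b * b\<close> all lie in the \<open>F\<close>-span of the \<open>card Be\<close> values
  \<open>\<alpha> b\<close>, so subtracting it lowers the rank \<open>n\<close> of \<open>h\<close> by at most \<open>card Be\<close>.\<close>
lemma rk_diff_elementary_ge:
  assumes h: "coords_indep F h {..<n}" and Be: "finite Be" "\<forall>b\<in>Be. \<forall>j. b j \<in> F"
  shows "n \<le> rk F n (\<lambda>j. h j - (\<Sum>b\<in>Be. \<alpha> b * b j)) + card Be"
proof -
  define z where "z = (\<lambda>j. h j - (\<Sum>b\<in>Be. \<alpha> b * b j))"
  obtain S where S: "S \<subseteq> {..<n}" "coords_indep F z S" "card S = rk F n z" by (rule rk_obtain)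
  have finS: "finite S" using S(1) finite_subset by blast
  define V where "V = (\<lambda>(a, b). a + b) ` (span_over F S z \<times> span_over F Be \<alpha>)"
  have "h j \<in> V" if "j < n" for j
  proof -
    have "z j \<in> span_over F S z" using rk_maximal_span[OF subfield S that] .
    moreover have "(\<Sum>b\<in>Be. \<alpha> b * b j) \<in> span_over F Be \<alpha>"
      unfolding span_over_def using Be(2) by (auto simp: mult.commute)
    ultimately show ?thesis unfolding V_def z_def by force
  qed
  moreover have "subspace_over F V"
    unfolding V_def by (intro subspace_over_plus subspace_over_span subfield)
  ultimately have "q ^ n \<le> card V" using card_subspace_ge_indep[OF h] by simp
  also have "\<dots> \<le> card (span_over F S z \<times> span_over F Be \<alpha>)"
    unfolding V_def by (rule card_image_le) simp
  also have "\<dots> = card (span_over F S z) * card (span_over F Be \<alpha>)" by (rule card_cartesian_product)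
  also have "\<dots> \<le> q ^ card S * q ^ card Be"
    using card_span_over_le[of F S z, OF finite finS] card_span_over_le[of F Be \<alpha>, OF finite Be(1)] card_F
    by (intro mult_mono) auto
  finally have "q ^ n \<le> q ^ (card S + card Be)" by (simp add: power_add)
  then have "n \<le> card S + card Be" by (rule power_le_imp_le_exp[rotated]) (use q_ge_2 in linarith)
  then show ?thesis using S(3) unfolding z_def by simp
qed

lemma elementary_rank_covering_radius_ge:
  assumes C: "linear_code n k C" and El: "elementary_subspace F n C" and "n \<le> m"
  shows "n - k \<le> rank_covering_radius F n C"
proof -
  obtain Be where Be: "finite Be" "Be \<subseteq> vecs n" "\<forall>b\<in>Be. \<forall>j. b j \<in> F" "vec_indep UNIV Be"
    "C = vec_span Be"
    using El unfolding elementary_subspace_def by blast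
  have basics: "finite C" "C \<noteq> {}" "card C = card (UNIV :: 'a set) ^ k"
    using linear_code_basics[OF C] by auto
  then have "card Be = k"
    using card_vec_span[OF Be(1,4)] Be(5) card_UNIV_ge_2[where 'a='a] by (simp add: power_inject_exp)
  obtain h where h: "coords_indep F h {..<n}" using exists_coords_indep[OF \<open>n \<le> m\<close>] by blast
  define x where "x = (\<lambda>j. if j < n then h j else 0)"
  show ?thesis
  proof (rule rank_covering_radius_ge[OF basics(1,2)])
    show "x \<in> vecs n" unfolding x_def vecs_def by simp
    fix c assume "c \<in> C"
    then obtain \<alpha> where c: "c = (\<lambda>j. \<Sum>b\<in>Be. \<alpha> b * b j)" using Be(5) unfolding vec_span_def by blast
    have "rank_dist F n x c = rk F n (\<lambda>j. h j - (\<Sum>b\<in>Be. \<alpha> b * b j))"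
      unfolding rank_dist_def c x_def by (rule rk_cong) simp
    then show "n - k \<le> rank_dist F n x c"
      using rk_diff_elementary_ge[OF h Be(1,3), of \<alpha>] \<open>card Be = k\<close> by simp
  qed
qed

end

section \<open>Generalized Gabidulin codes\<close>

lemma summation_by_parts:
  fixes a s :: "nat \<Rightarrow> 'a::comm_ring"
  shows "(\<Sum>j\<le>t. (\<Sum>i\<in>{j<..Suc t}. a i) * (s (Suc j) - s j))
       = (\<Sum>i\<le>Suc t. a i * s i) - (\<Sum>i\<le>Suc t. a i) * s 0"
proof (induction t)
  case 0
  have "{0<..Suc 0} = {Suc 0}" by auto
  then show ?case by (simp add: algebra_simps)
next
  case (Suc t)
  have split: "(\<Sum>i\<in>{j<..Suc (Suc t)}. a i) = (\<Sum>i\<in>{j<..Suc t}. a i) + a (Suc (Suc t))" if "j \<le> Suc t" for j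
  proof -
    have "{j<..Suc (Suc t)} = insert (Suc (Suc t)) {j<..Suc t}" using that by auto
    then show ?thesis by (simp add: add.commute)
  qed
  have tel: "(\<Sum>j\<le>t. (s (Suc j) - s j)) = s (Suc t) - s 0" for t
    by (induction t) (auto simp: algebra_simps)
  have "(\<Sum>j\<le>Suc t. (\<Sum>i\<in>{j<..Suc (Suc t)}. a i) * (s (Suc j) - s j))
      = (\<Sum>j\<le>Suc t. (\<Sum>i\<in>{j<..Suc t}. a i) * (s (Suc j) - s j) + a (Suc (Suc t)) * (s (Suc j) - s j))"
    by (rule sum.cong) (auto simp: split algebra_simps)
  also have "\<dots> = (\<Sum>j\<le>Suc t. (\<Sum>i\<in>{j<..Suc t}. a i) * (s (Suc j) - s j)) + a (Suc (Suc t)) * (s (Suc (Suc t)) - s 0)"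
    by (simp add: sum.distrib sum_distrib_left[symmetric] tel)
  also have "(\<Sum>j\<le>Suc t. (\<Sum>i\<in>{j<..Suc t}. a i) * (s (Suc j) - s j)) = (\<Sum>j\<le>t. (\<Sum>i\<in>{j<..Suc t}. a i) * (s (Suc j) - s j))"
    by simp
  finally show ?case using Suc by (simp add: algebra_simps)
qed

lemma card_preimage_le:
  fixes f :: "'a::{finite,ab_group_add} \<Rightarrow> 'b::ab_group_add"
  assumes add: "\<And>x y. f (x - y) = f x - f y" and fin: "finite A"
  shows "card {y. f y \<in> A} \<le> card A * card {y. f y = 0}"
proof -
  let ?I = "A \<inter> range f"
  have sub: "{y. f y \<in> A} \<subseteq> (\<Union>a\<in>?I. {y. f y = a})" by auto
  have each: "card {y. f y = a} \<le> card {y. f y = 0}" if aI: "a \<in> ?I" for a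
  proof -
    obtain y0 where y0: "a = f y0" using aI by auto
    have "{y. f y = a} \<subseteq> (\<lambda>z. y0 + z) ` {y. f y = 0}"
    proof
      fix y assume "y \<in> {y. f y = a}"
      then have "f (y - y0) = 0" using add y0 by simp
      then show "y \<in> (\<lambda>z. y0 + z) ` {y. f y = 0}" by (intro image_eqI[of _ _ "y - y0"]) auto
    qed
    then have "card {y. f y = a} \<le> card ((\<lambda>z. y0 + z) ` {y. f y = 0})" by (intro card_mono) auto
    also have "\<dots> \<le> card {y. f y = 0}" by (rule card_image_le) simp
    finally show ?thesis .
  qed
  have "card {y. f y \<in> A} \<le> card (\<Union>a\<in>?I. {y. f y = a})" by (rule card_mono[OF _ sub]) simp
  also have "\<dots> \<le> (\<Sum>a\<in>?I. card {y. f y = a})" by (rule card_UN_le) (use fin in simp)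
  also have "\<dots> \<le> (\<Sum>a\<in>?I. card {y. f y = 0})" by (rule sum_mono) (rule each)
  also have "\<dots> = card ?I * card {y. f y = 0}" by simp
  also have "\<dots> \<le> card A * card {y. f y = 0}" by (intro mult_right_mono card_mono fin) auto
  finally show ?thesis .
qed

text \<open>\<open>frob i\<close> is the \<open>i\<close>-th iterate of \<open>x \<mapsto> x ^ q ^ e\<close>; as \<open>e\<close> is coprime to \<open>m\<close>, this
  automorphism generates the Galois group of \<open>'a\<close> over \<open>F\<close>, so its fixed field is \<open>F\<close>.\<close>
locale frobenius_generator = finite_field_extension F q m for F :: "'a::{field,finite} set" and q m +
  fixes e :: nat
  assumes coprime_e_m: "coprime e m"
begin

definition frob :: "nat \<Rightarrow> 'a \<Rightarrow> 'a" where
  "frob i y = y ^ (q ^ (e * i))"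

lemma frob_diff: "frob i (x - y) = frob i x - frob i y"
  unfolding frob_def by (rule frobenius_diff)

lemma frob_mult: "frob i (x * y) = frob i x * frob i y"
  unfolding frob_def by (simp add: power_mult_distrib)

lemma frob_sum: "frob i (sum f A) = (\<Sum>x\<in>A. frob i (f x))"
  unfolding frob_def by (rule frobenius_sum)

lemma frob_0 [simp]: "frob 0 y = y"
  unfolding frob_def by simp

lemma frob_eq_0_iff [simp]: "frob i y = 0 \<longleftrightarrow> y = 0"
  unfolding frob_def using q_ge_2 by simp

lemma frob_mem_F: "c \<in> F \<Longrightarrow> frob i c = c"
  unfolding frob_def by (rule power_q_power_of_mem)

lemma frob_frob_1: "frob i (frob 1 y) = frob (Suc i) y"
  unfolding frob_def by (simp add: power_add flip: power_mult)

lemma mem_F_if_frob_1_fixed: "frob 1 y = y \<Longrightarrow> y \<in> F"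
  using mem_if_fixed_coprime_frobenius[OF coprime_e_m] unfolding frob_def by simp

definition linpoly :: "nat \<Rightarrow> (nat \<Rightarrow> 'a) \<Rightarrow> 'a \<Rightarrow> 'a" where
  "linpoly t w y = (\<Sum>i\<le>t. w i * frob i y)"

lemma linpoly_diff: "linpoly t w (x - y) = linpoly t w x - linpoly t w y"
  unfolding linpoly_def by (simp add: frob_diff algebra_simps sum_subtractf)

lemma linpoly_lin_comb:
  assumes "\<And>j. j \<in> I \<Longrightarrow> c j \<in> F"
  shows "linpoly t w (\<Sum>j\<in>I. c j * y j) = (\<Sum>j\<in>I. c j * linpoly t w (y j))"
proof -
  have "linpoly t w (\<Sum>j\<in>I. c j * y j) = (\<Sum>i\<le>t. \<Sum>j\<in>I. c j * (w i * frob i (y j)))"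
    unfolding linpoly_def using assms
    by (simp add: frob_sum frob_mult frob_mem_F sum_distrib_left algebra_simps)
  also have "\<dots> = (\<Sum>j\<in>I. c j * linpoly t w (y j))"
    unfolding linpoly_def by (subst sum.swap) (simp add: sum_distrib_left)
  finally show ?thesis .
qed

text \<open>Summation by parts; the boundary term vanishes because \<open>v\<close> is a root.\<close>
lemma linpoly_mult_root:
  assumes "linpoly (Suc t) w v = 0"
  shows "linpoly (Suc t) w (v * y)
           = linpoly t (\<lambda>j. \<Sum>i\<in>{j<..Suc t}. w i * frob i v) (frob 1 y - y)"
proof -
  have "linpoly t (\<lambda>j. \<Sum>i\<in>{j<..Suc t}. w i * frob i v) (frob 1 y - y)
      = (\<Sum>j\<le>t. (\<Sum>i\<in>{j<..Suc t}. w i * frob i v) * (frob (Suc j) y - frob j y))"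
    unfolding linpoly_def by (simp add: frob_diff frob_frob_1 frob_frob_1[simplified])
  also have "\<dots> = (\<Sum>i\<le>Suc t. w i * frob i v * frob i y) - (\<Sum>i\<le>Suc t. w i * frob i v) * frob 0 y"
    by (rule summation_by_parts)
  also have "\<dots> = linpoly (Suc t) w (v * y)"
    using assms unfolding linpoly_def by (simp add: frob_mult mult.assoc)
  finally show ?thesis by simp
qed

lemma linpoly_mult_root_coeffs_nonzero:
  assumes root: "linpoly (Suc t) w v = 0" and "v \<noteq> 0" and w: "\<exists>i\<le>Suc t. w i \<noteq> 0"
  shows "\<exists>j\<le>t. (\<Sum>i\<in>{j<..Suc t}. w i * frob i v) \<noteq> 0"
proof (rule ccontr)
  define c where "c j = (\<Sum>i\<in>{j<..Suc t}. w i * frob i v)" for j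
  assume "\<not> (\<exists>j\<le>t. (\<Sum>i\<in>{j<..Suc t}. w i * frob i v) \<noteq> 0)"
  then have c0: "c j = 0" if "j \<le> Suc t" for j
    using that unfolding c_def by (cases "j = Suc t") auto
  have "w i * frob i v = c (i - 1) - c i" if "0 < i" "i \<le> Suc t" for i
  proof -
    have "{i - 1<..Suc t} = insert i {i<..Suc t}" using that by auto
    then show ?thesis unfolding c_def by simp
  qed
  moreover have "w 0 * frob 0 v = - c 0"
  proof -
    have "{..Suc t} = insert 0 {0<..Suc t}" by auto
    then show ?thesis using root unfolding c_def linpoly_def by (simp add: eq_neg_iff_add_eq_0)
  qed
  ultimately have "w i * frob i v = 0" if "i \<le> Suc t" for i
    using that c0 by (cases "i = 0") auto
  then show False using w \<open>v \<noteq> 0\<close> by auto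
qed

lemma card_linpoly_roots_Suc_le:
  assumes v: "linpoly (Suc t) w v = 0" "v \<noteq> 0"
  shows "card {y. linpoly (Suc t) w y = 0}
           \<le> card {z. linpoly t (\<lambda>j. \<Sum>i\<in>{j<..Suc t}. w i * frob i v) z = 0} * q"
proof -
  define c where "c j = (\<Sum>i\<in>{j<..Suc t}. w i * frob i v)" for j
  define D where "D y = frob 1 y - y" for y
  have "{y. linpoly (Suc t) w y = 0} \<subseteq> (\<lambda>y. v * y) ` {y. D y \<in> {z. linpoly t c z = 0}}"
  proof
    fix y assume "y \<in> {y. linpoly (Suc t) w y = 0}"
    then have "D (y / v) \<in> {z. linpoly t c z = 0}"
      using linpoly_mult_root[OF v(1), of "y / v"] v(2) unfolding c_def D_def by simp
    then show "y \<in> (\<lambda>y. v * y) ` {y. D y \<in> {z. linpoly t c z = 0}}"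
      using v(2) by (intro image_eqI[of _ _ "y / v"]) auto
  qed
  then have "card {y. linpoly (Suc t) w y = 0} \<le> card {y. D y \<in> {z. linpoly t c z = 0}}"
    by (meson card_image_le card_mono finite order_trans)
  also have "\<dots> \<le> card {z. linpoly t c z = 0} * card {y. D y = 0}"
    by (rule card_preimage_le) (simp_all add: D_def frob_diff)
  also have "card {y. D y = 0} \<le> card F"
    using mem_F_if_frob_1_fixed unfolding D_def by (intro card_mono) auto
  finally show ?thesis unfolding c_def card_F by simp
qed

text \<open>The bound is \<open>q^t\<close> rather than \<open>q^(e t)\<close> because each factorisation step only loses the
  kernel of \<open>y \<mapsto> frob 1 y - y\<close>, which is \<open>F\<close> since \<open>e\<close> is coprime to \<open>m\<close>.\<close>
lemma card_linpoly_roots_le: "(\<exists>i\<le>t. w i \<noteq> 0) \<Longrightarrow> card {y. linpoly t w y = 0} \<le> q ^ t"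
proof (induction t arbitrary: w)
  case 0
  then have "{y. linpoly 0 w y = 0} = {0}" unfolding linpoly_def by auto
  then show ?case by simp
next
  case (Suc t)
  show ?case
  proof (cases "{y. linpoly (Suc t) w y = 0} \<subseteq> {0}")
    case True
    then have "card {y. linpoly (Suc t) w y = 0} \<le> card {0::'a}" by (intro card_mono) auto
    also have "\<dots> \<le> q ^ Suc t" using q_ge_2 by (simp add: Suc_le_eq)
    finally show ?thesis .
  next
    case False
    then obtain v where v: "linpoly (Suc t) w v = 0" "v \<noteq> 0" by auto
    then have "card {z. linpoly t (\<lambda>j. \<Sum>i\<in>{j<..Suc t}. w i * frob i v) z = 0} \<le> q ^ t"
      using linpoly_mult_root_coeffs_nonzero[OF v Suc.prems] by (intro Suc.IH)
    then show ?thesis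
      using card_linpoly_roots_Suc_le[OF v] by (simp add: mult.commute order_trans)
  qed
qed

text \<open>\<open>linpoly t w\<close> is \<open>F\<close>-linear with at most \<open>q^t\<close> roots, so it maps the \<open>q^n\<close> elements of the
  \<open>F\<close>-span of \<open>g\<close> onto at least \<open>q^(n - t)\<close> values, all lying in the \<open>F\<close>-span of the
  coordinates of \<open>linpoly t w \<circ> g\<close>.\<close>
lemma rk_linpoly_ge:
  assumes g: "coords_indep F g {..<n}" and w: "\<exists>i\<le>t. w i \<noteq> 0"
  shows "n \<le> rk F n (\<lambda>j. linpoly t w (g j)) + t"
proof -
  define z where "z j = linpoly t w (g j)" for j
  obtain S where S: "S \<subseteq> {..<n}" "coords_indep F z S" "card S = rk F n z" by (rule rk_obtain)
  have finS: "finite S" using S(1) finite_subset by blast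
  define W where "W = span_over F {..<n} g"
  have "linpoly t w ` W \<subseteq> span_over F {..<n} z"
  proof
    fix v assume "v \<in> linpoly t w ` W"
    then obtain c where c: "v = linpoly t w (\<Sum>j<n. c j * g j)" "\<forall>j<n. c j \<in> F"
      unfolding W_def span_over_def by auto
    then have "v = (\<Sum>j<n. c j * z j)" unfolding z_def using linpoly_lin_comb[of "{..<n}" c] by simp
    then show "v \<in> span_over F {..<n} z" unfolding span_over_def using c(2) by blast
  qed
  also have "\<dots> \<subseteq> span_over F S z"
    using rk_maximal_span[OF subfield S] by (intro span_over_subset subspace_over_span subfield) auto
  finally have "card (linpoly t w ` W) \<le> q ^ card S"
    using card_mono[OF finite] card_span_over_le[of F S z, OF finite finS] card_F
    by (metis order_trans)
  have "q ^ n = card W" unfolding W_def using card_span_over[OF subfield finite _ g] card_F by simp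
  also have "\<dots> \<le> card {y. linpoly t w y \<in> linpoly t w ` W}" by (intro card_mono) auto
  also have "\<dots> \<le> card (linpoly t w ` W) * card {y. linpoly t w y = 0}"
    by (rule card_preimage_le) (simp_all add: linpoly_diff)
  also have "\<dots> \<le> q ^ card S * q ^ t"
    using \<open>card (linpoly t w ` W) \<le> _\<close> card_linpoly_roots_le[OF w] by (rule mult_mono) simp_all
  finally have "q ^ n \<le> q ^ (card S + t)" by (simp add: power_add)
  then have "n \<le> card S + t" by (rule power_le_imp_le_exp[rotated]) (use q_ge_2 in linarith)
  then show ?thesis using S(3) unfolding z_def by simp
qed

definition gab_word :: "nat \<Rightarrow> nat \<Rightarrow> (nat \<Rightarrow> 'a) \<Rightarrow> (nat \<Rightarrow> 'a) \<Rightarrow> nat \<Rightarrow> 'a" where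
  "gab_word n k g u = (\<lambda>j. if j < n then (\<Sum>i<k. u i * frob i (g j)) else 0)"

lemma inj_on_gab_word:
  assumes g: "coords_indep F g {..<n}" and "k \<le> n"
  shows "inj_on (gab_word n k g) ({..<k} \<rightarrow>\<^sub>E UNIV)"
proof (rule inj_onI, rule ccontr)
  fix u u' assume u: "u \<in> {..<k} \<rightarrow>\<^sub>E UNIV" "u' \<in> {..<k} \<rightarrow>\<^sub>E UNIV"
    and eq: "gab_word n k g u = gab_word n k g u'" and "u \<noteq> u'"
  then obtain i0 where i0: "i0 < k" "u i0 \<noteq> u' i0" by (metis PiE_ext lessThan_iff)
  have k: "{..<k} = {..k - 1}" using i0 by auto
  define d where "d i = u i - u' i" for i
  have "linpoly (k - 1) d (g j) = 0" if "j < n" for j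
    using fun_cong[OF eq, of j] that unfolding gab_word_def linpoly_def d_def k
    by (simp add: algebra_simps sum_subtractf)
  then have "rk F n (\<lambda>j. linpoly (k - 1) d (g j)) = 0" by (simp add: rk_zero_iff[OF subfield])
  moreover have "\<exists>i\<le>k - 1. d i \<noteq> 0" using i0 unfolding d_def by (intro exI[of _ i0]) auto
  ultimately have "n \<le> k - 1" using rk_linpoly_ge[OF g, of "k - 1" d] by simp
  then show False using i0 \<open>k \<le> n\<close> by simp
qed

lemma gabidulin_dim_eq:
  assumes C: "linear_code n k C" and "k' \<le> n" and g: "coords_indep F g {..<n}"
    and C_eq: "C = range (gab_word n k' g)"
  shows "k' = k"
proof -
  have "gab_word n k' g u = gab_word n k' g (restrict u {..<k'})" for u
    unfolding gab_word_def by (intro ext if_cong refl sum.cong) auto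
  then have "range (gab_word n k' g) \<subseteq> gab_word n k' g ` ({..<k'} \<rightarrow>\<^sub>E UNIV)"
    by (metis image_eqI image_subsetI restrict_PiE_iff UNIV_I)
  then have "gab_word n k' g ` ({..<k'} \<rightarrow>\<^sub>E UNIV) = range (gab_word n k' g)" by blast
  then have "card C = card (UNIV :: 'a set) ^ k'"
    using card_image[OF inj_on_gab_word[OF g \<open>k' \<le> n\<close>]] C_eq by (simp add: card_PiE)
  then show ?thesis
    using linear_code_basics(4)[OF C] card_UNIV_ge_2[where 'a='a] by (simp add: power_inject_exp)
qed

lemma gabidulin_rank_covering_radius_ge:
  assumes C: "linear_code n k' C" and g: "coords_indep F g {..<n}"
    and C_eq: "C = range (gab_word n k g)"
  shows "n - k \<le> rank_covering_radius F n C"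
proof (rule rank_covering_radius_ge)
  show "finite C" "C \<noteq> {}" using linear_code_basics[OF C] by auto
  show "(\<lambda>j. if j < n then frob k (g j) else 0) \<in> vecs n" by (simp add: vecs_def)
  fix c assume "c \<in> C"
  then obtain u where c: "c = gab_word n k g u" using C_eq by blast
  define w where "w i = (if i = k then 1 else - u i)" for i
  have "linpoly k w (g j) = frob k (g j) - (\<Sum>i<k. u i * frob i (g j))" for j
    unfolding linpoly_def w_def by (simp add: lessThan_Suc_atMost[symmetric] sum_negf)
  then have "rank_dist F n (\<lambda>j. if j < n then frob k (g j) else 0) c = rk F n (\<lambda>j. linpoly k w (g j))"
    unfolding rank_dist_def c gab_word_def by (intro rk_cong) simp
  moreover have "\<exists>i\<le>k. w i \<noteq> 0" unfolding w_def by auto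
  ultimately show "n - k \<le> rank_dist F n (\<lambda>j. if j < n then frob k (g j) else 0) c"
    using rk_linpoly_ge[OF g, of k w] by simp
qed

end

context finite_field_extension
begin

lemma gen_gabidulin_rank_covering_radius_ge:
  assumes C: "linear_code n k C" and "gen_gabidulin F q m n C"
  shows "n - k \<le> rank_covering_radius F n C"
proof -
  obtain k' g a where k': "k' \<le> n" and g: "coords_indep F g {..<n}" and "coprime a (int m)"
    and C_eq: "C = {x. \<exists>u. x = (\<lambda>j. if j < n then (\<Sum>i<k'. u i * g j ^ (q ^ nat ((a * int i) mod int m))) else 0)}"
    using assms(2) unfolding gen_gabidulin_def by blast
  define e where "e = nat (a mod int m)"
  have "int e = a mod int m" unfolding e_def using m_ge_1 by simp
  moreover have "coprime (a mod int m) (int m)" using \<open>coprime a (int m)\<close> m_ge_1 by simp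
  ultimately have "coprime e m" by (metis coprime_int_iff)
  interpret frobenius_generator F q m e by unfold_locales fact
  have "nat ((a * int i) mod int m) = (e * i) mod m" for i
    using \<open>int e = a mod int m\<close> by (metis mod_mult_left_eq nat_int of_nat_mod of_nat_mult)
  then have exponent: "g j ^ (q ^ nat ((a * int i) mod int m)) = frob i (g j)" for i j
    unfolding frob_def using power_q_power_mod by simp
  have "C = range (gab_word n k' g)" unfolding C_eq gab_word_def exponent by blast
  then show ?thesis
    using gabidulin_rank_covering_radius_ge[OF C g] gabidulin_dim_eq[OF C k' g] by simp
qed

end

theorem proposition14:
  fixes F :: "'a::{field,finite} set" and q m n k \<rho> :: nat and C :: "(nat \<Rightarrow> 'a) set"
  assumes "subfield F"
    and "card F = q"
    and "card (UNIV :: 'a set) = q ^ m"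
    and "n \<le> m"
    and "linear_code n k C"
    and "\<rho> = rank_covering_radius F n C"
    and "\<rho> \<in> {0, 1, n - 1, n}
         \<or> real (\<rho> * (n - \<rho>)) \<le> real m - sigma q
         \<or> gen_gabidulin F q m n C
         \<or> elementary_subspace F n C"
  shows "k = n - \<rho>"
proof -
  interpret finite_field_extension F q m using assms(1-3) by unfold_locales
  note C = assms(5) and rho = assms(6)
  have "\<rho> \<le> n - k" "k \<le> n"
    using rank_covering_radius_le_redundancy[OF subfield C] linear_code_basics(5)[OF C] rho by auto
  have covering: "n \<le> k + \<rho>" if "qbinomial q n \<rho> < q ^ m"
    using sphere_covering_bound[OF C rho] that card_UNIV by simp
  have "n \<le> k + \<rho>"
    using assms(7)
  proof (elim disjE)
    assume "\<rho> \<in> {0, 1, n - 1, n}"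
    then show ?thesis
      using covering qbinomial_less_if_extreme[OF q_ge_2 m_ge_1 assms(4)] by (cases "\<rho> = n") auto
  next
    assume "real (\<rho> * (n - \<rho>)) \<le> real m - sigma q"
    then show ?thesis using covering qbinomial_less_if_sigma[OF q_ge_2] \<open>\<rho> \<le> n - k\<close> by simp
  next
    assume "gen_gabidulin F q m n C"
    then show ?thesis using gen_gabidulin_rank_covering_radius_ge[OF C] rho by simp
  next
    assume "elementary_subspace F n C"
    then show ?thesis using elementary_rank_covering_radius_ge[OF C _ assms(4)] rho by simp
  qed
  then show ?thesis using \<open>\<rho> \<le> n - k\<close> \<open>k \<le> n\<close> by simp
qed

end
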